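(* Let $1<p_1<2$ and $\alpha=\frac1{p_1}-\frac12$. Let $a:\mathbb{Z}^n\to\mathbb{C}$ satisfy $|a(\xi)|\le C\langle\xi\rangle^m$ for all $\xi\in\mathbb{Z}^n$, with $m<-n-\alpha n$. Then the Fourier multiplier $T_a$ is a nuclear operator on $B^w_{p_1,2}(\mathbb{T}^n)$ for every $w\in\mathbb{R}$, and $\mathrm{Tr}(T_a)=\sum_{\xi\in\mathbb{Z}^n}a(\xi)=\sum_n\lambda_n(T_a)$, where $(\lambda_n(T_a))$ is the sequence of eigenvalues of $T_a$ with multiplicities counted.
   Context: $\widehat f(\xi)=\int_{\mathbb{T}^n}e^{-i2\pi x\cdot\xi}f(x)dx$, $\langle\xi\rangle=(1+|\xi|^2)^{1/2}$. $T_au(x)=\sum_{\xi\in\mathbb{Z}^n}e^{i2\pi x\cdot\xi}a(\xi)\widehat u(\xi)$. Periodic Besov spaces: $\|f\|_{B^w_{p,q}}=\big(\sum_{m\ge0}2^{mwq}\|\sum_{2^m\le|\xi|<2^{m+1}}e^{i2\pi x\cdot\xi}\widehat f(\xi)\|^q_{L^p(\mathbb{T}^n)}\big)^{1/q}$. $T:E\to E$ is nuclear if $T=\sum_ne'_n(\cdot)y_n$ with $\sum_n\|e'_n\|_{E'}\|y_n\|_E<\infty$; its nuclear trace is $\sum_ne'_n(y_n)$. *)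

theory Defs
  imports "HOL-Analysis.Analysis" "HOL-Library.Function_Algebras"
begin

text \<open>Dimension n is the cardinality of the finite index type 'n.
  Frequencies: int^'n (= Z^n); torus points: real^'n restricted to [0,1]^n.
  A periodic distribution / function on T^n is represented by its sequence
  of Fourier coefficients c :: int^'n => complex.\<close>

definition tinner :: "real^'n \<Rightarrow> int^'n \<Rightarrow> real" where
  "tinner x \<xi> = (\<Sum>i\<in>UNIV. x$i * of_int (\<xi>$i))"

definition inorm :: "int^'n \<Rightarrow> real" where
  "inorm \<xi> = sqrt (\<Sum>i\<in>UNIV. (of_int (\<xi>$i))^2)"

definition jbracket :: "int^'n \<Rightarrow> real" where
  "jbracket \<xi> = sqrt (1 + (inorm \<xi>)^2)"

definition dyadic_block :: "nat \<Rightarrow> (int^'n) set" where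
  "dyadic_block m = {\<xi>. (m = 0 \<or> 2 ^ m \<le> inorm \<xi>) \<and> inorm \<xi> < 2 ^ (m + 1)}"

definition trig_block :: "nat \<Rightarrow> (int^'n \<Rightarrow> complex) \<Rightarrow> real^'n \<Rightarrow> complex" where
  "trig_block m c x = (\<Sum>\<xi>\<in>dyadic_block m. exp (\<i> * 2 * pi * complex_of_real (tinner x \<xi>)) * c \<xi>)"

definition torus_Lp_norm :: "real \<Rightarrow> (real^'n \<Rightarrow> complex) \<Rightarrow> real" where
  "torus_Lp_norm p f = (integral (cbox 0 One) (\<lambda>x. norm (f x) powr p)) powr (1 / p)"

definition besov_term :: "real \<Rightarrow> real \<Rightarrow> real \<Rightarrow> (int^'n \<Rightarrow> complex) \<Rightarrow> nat \<Rightarrow> real" where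
  "besov_term w p q c m = (2 powr (real m * w) * torus_Lp_norm p (trig_block m c)) powr q"

definition besov_space :: "real \<Rightarrow> real \<Rightarrow> real \<Rightarrow> (int^'n \<Rightarrow> complex) set" where
  "besov_space w p q = {c. summable (besov_term w p q c)}"

definition besov_norm :: "real \<Rightarrow> real \<Rightarrow> real \<Rightarrow> (int^'n \<Rightarrow> complex) \<Rightarrow> real" where
  "besov_norm w p q c = (suminf (besov_term w p q c)) powr (1 / q)"

definition fourier_mult :: "(int^'n \<Rightarrow> complex) \<Rightarrow> (int^'n \<Rightarrow> complex) \<Rightarrow> (int^'n \<Rightarrow> complex)" where
  "fourier_mult a c = (\<lambda>\<xi>. a \<xi> * c \<xi>)"

definition besov_dual :: "real \<Rightarrow> real \<Rightarrow> real \<Rightarrow> ((int^'n \<Rightarrow> complex) \<Rightarrow> complex) \<Rightarrow> bool" where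
  "besov_dual w p q l \<longleftrightarrow>
     (\<forall>c\<in>besov_space w p q. \<forall>d\<in>besov_space w p q. l (\<lambda>\<xi>. c \<xi> + d \<xi>) = l c + l d) \<and>
     (\<forall>s. \<forall>c\<in>besov_space w p q. l (\<lambda>\<xi>. s * c \<xi>) = s * l c) \<and>
     (\<exists>K. \<forall>c\<in>besov_space w p q. norm (l c) \<le> K * besov_norm w p q c)"

definition dual_norm :: "real \<Rightarrow> real \<Rightarrow> real \<Rightarrow> ((int^'n \<Rightarrow> complex) \<Rightarrow> complex) \<Rightarrow> real" where
  "dual_norm w p q l = Sup {norm (l c) | c. c \<in> besov_space w p q \<and> besov_norm w p q c \<le> 1}"

definition nuclear_rep :: "real \<Rightarrow> real \<Rightarrow> real \<Rightarrow> ((int^'n \<Rightarrow> complex) \<Rightarrow> (int^'n \<Rightarrow> complex))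
    \<Rightarrow> (nat \<Rightarrow> (int^'n \<Rightarrow> complex) \<Rightarrow> complex) \<Rightarrow> (nat \<Rightarrow> int^'n \<Rightarrow> complex) \<Rightarrow> bool" where
  "nuclear_rep w p q T l y \<longleftrightarrow>
     (\<forall>k. besov_dual w p q (l k)) \<and> (\<forall>k. y k \<in> besov_space w p q) \<and>
     summable (\<lambda>k. dual_norm w p q (l k) * besov_norm w p q (y k)) \<and>
     (\<forall>c\<in>besov_space w p q. T c \<in> besov_space w p q \<and>
        (\<lambda>N. besov_norm w p q (\<lambda>\<xi>. T c \<xi> - (\<Sum>k<N. l k c * y k \<xi>))) \<longlonglongrightarrow> 0)"

definition nuclear_on :: "real \<Rightarrow> real \<Rightarrow> real \<Rightarrow> ((int^'n \<Rightarrow> complex) \<Rightarrow> (int^'n \<Rightarrow> complex)) \<Rightarrow> bool" where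
  "nuclear_on w p q T \<longleftrightarrow> (\<exists>l y. nuclear_rep w p q T l y)"

definition nuclear_trace_of :: "(nat \<Rightarrow> (int^'n \<Rightarrow> complex) \<Rightarrow> complex) \<Rightarrow> (nat \<Rightarrow> int^'n \<Rightarrow> complex) \<Rightarrow> complex" where
  "nuclear_trace_of l y = (\<Sum>k. l k (y k))"

definition besov_eigenvalues :: "real \<Rightarrow> real \<Rightarrow> real \<Rightarrow> ((int^'n \<Rightarrow> complex) \<Rightarrow> (int^'n \<Rightarrow> complex)) \<Rightarrow> complex set" where
  "besov_eigenvalues w p q T = {\<mu>. \<exists>c\<in>besov_space w p q. c \<noteq> 0 \<and> T c = (\<lambda>\<xi>. \<mu> * c \<xi>)}"

definition gen_eigenspace :: "real \<Rightarrow> real \<Rightarrow> real \<Rightarrow> ((int^'n \<Rightarrow> complex) \<Rightarrow> (int^'n \<Rightarrow> complex)) \<Rightarrow> complex \<Rightarrow> (int^'n \<Rightarrow> complex) set" where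
  "gen_eigenspace w p q T \<mu> = {c \<in> besov_space w p q.
      \<exists>k. ((\<lambda>d. (\<lambda>\<xi>. T d \<xi> - \<mu> * d \<xi>)) ^^ k) c = 0}"

definition alg_mult :: "real \<Rightarrow> real \<Rightarrow> real \<Rightarrow> ((int^'n \<Rightarrow> complex) \<Rightarrow> (int^'n \<Rightarrow> complex)) \<Rightarrow> complex \<Rightarrow> nat" where
  "alg_mult w p q T \<mu> = Vector_Spaces.vector_space.dim (\<lambda>(s::complex) (f::int^'n \<Rightarrow> complex). (\<lambda>\<xi>. s * f \<xi>)) (gen_eigenspace w p q T \<mu>)"

end

theory Submission
  imports Defs
begin

text \<open>Since \<open>m < -n\<close>, the symbol is absolutely summable over \<open>\<int>\<^sup>n\<close>: a dyadic
  shell \<open>2\<^sup>k \<le> |\<xi>| < 2\<^sup>k\<^sup>+\<^sup>1\<close> has \<open>O(2\<^sup>k\<^sup>n)\<close> points, on which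
  \<open>|a| = O(2\<^sup>k\<^sup>m)\<close>. A Fourier coefficient \<open>c(\<xi>)\<close> is bounded by the \<open>L\<^sup>1\<close>, hence
  the \<open>L\<^sup>p\<close>, norm of the dyadic block containing \<open>\<xi>\<close>, so \<open>|c(\<xi>)| \<le> 2\<^sup>-\<^sup>k\<^sup>w\<parallel>c\<parallel>\<close>
  and the coordinate functionals are continuous. Hence
  \<open>T\<^sub>a = \<Sum>\<^sub>\<xi> a(\<xi>) c(\<xi>) \<delta>\<^sub>\<xi>\<close> is a nuclear representation.
  For any nuclear representation \<open>\<Sum>\<^sub>k l\<^sub>k \<otimes> y\<^sub>k\<close> of an operator \<open>T\<close>, truncating each
  \<open>y\<^sub>k\<close> to the first \<open>M\<close> dyadic blocks and expanding in the \<open>\<delta>\<^sub>\<xi>\<close> gives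
  \<open>\<Sum>\<^sub>k l\<^sub>k(trunc\<^sub>M y\<^sub>k) = \<Sum>\<^bsub>|\<xi>| < 2\<^sup>M\<^esub> (T \<delta>\<^sub>\<xi>)(\<xi>)\<close>, and Tannery's theorem lets
  \<open>M \<rightarrow> \<infinity>\<close>; so the nuclear trace is the sum of the diagonal, here \<open>\<Sum> a(\<xi>)\<close>.
  Finally \<open>T\<^sub>a\<close> is diagonal in the \<open>\<delta>\<^sub>\<xi>\<close>: its nonzero eigenvalues are the nonzero values
  of \<open>a\<close>, the generalised eigenspace of \<open>\<mu>\<close> consists of the sequences supported on the
  finite level set \<open>a\<^sup>-\<^sup>1(\<mu>)\<close>, and regrouping \<open>\<Sum> a(\<xi>)\<close> by values gives the eigenvalue sum.\<close>

section \<open>Characters of the torus\<close>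

lemma integral_lborel_prod:
  fixes f :: "'a::euclidean_space \<Rightarrow> real \<Rightarrow> complex"
  assumes [measurable]: "\<And>b. b \<in> Basis \<Longrightarrow> f b \<in> borel_measurable borel"
    and int: "\<And>b. b \<in> Basis \<Longrightarrow> integrable lborel (f b)"
  shows "(\<integral>x. (\<Prod>b\<in>Basis. f b (x \<bullet> b)) \<partial>lborel) = (\<Prod>b\<in>Basis. (\<integral>x. f b x \<partial>lborel))"
proof -
  interpret finite_product_sigma_finite "\<lambda>_. lborel" "Basis::'a set"
    by standard simp
  have coord: "(\<Sum>b'\<in>Basis. x b' *\<^sub>R b') \<bullet> b = x b" if "b \<in> Basis" for x and b :: 'a
    using that by (simp add: inner_sum_left inner_Basis if_distrib cong: if_cong)
  have "(\<integral>x. (\<Prod>b\<in>Basis. f b (x \<bullet> b)) \<partial>lborel) =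
     (\<integral>x. (\<Prod>b\<in>Basis. f b ((\<Sum>b'\<in>Basis. x b' *\<^sub>R b') \<bullet> b)) \<partial>(\<Pi>\<^sub>M b\<in>Basis. lborel))"
    by (subst lborel_eq) (simp add: integral_distr)
  also have "\<dots> = (\<integral>x. (\<Prod>b\<in>Basis. f b (x b)) \<partial>(\<Pi>\<^sub>M b\<in>Basis. lborel))"
    by (simp add: coord)
  also have "\<dots> = (\<Prod>b\<in>Basis. (\<integral>x. f b x \<partial>lborel))"
    by (rule product_integral_prod) (auto intro: int)
  finally show ?thesis .
qed

lemma has_integral_exp_2pi_int:
  fixes k :: int
  shows "((\<lambda>t::real. exp (\<i> * 2 * pi * complex_of_real (t * of_int k)))
           has_integral (if k = 0 then 1 else 0)) {0..1}"
proof (cases "k = 0")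
  case True
  then show ?thesis using has_integral_const_real[of "1::complex" 0 1] by simp
next
  case False
  define G where "G t = exp (\<i> * 2 * pi * complex_of_real (t * of_int k)) / (\<i> * 2 * pi * of_int k)"
    for t :: real
  have G': "(G has_vector_derivative exp (\<i> * 2 * pi * complex_of_real (t * of_int k)))
              (at t within {0..1})" for t
  proof -
    define H where "H z = exp (\<i> * 2 * pi * (z * of_int k)) / (\<i> * 2 * pi * of_int k)" for z :: complex
    have "(H has_field_derivative exp (\<i> * 2 * pi * (of_real t * of_int k))) (at (of_real t))"
      unfolding H_def using False by (auto intro!: derivative_eq_intros simp: field_simps)
    moreover have "G = (\<lambda>t. H (of_real t))" by (auto simp: G_def H_def)
    ultimately show ?thesis using has_vector_derivative_real_field by fastforce
  qed
  have "exp (\<i> * 2 * pi * complex_of_real (1 * of_int k)) = exp ((2 * of_int k * pi) * \<i>)"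
    by (simp add: algebra_simps)
  also have "\<dots> = 1" by (rule exp_integer_2pi) simp
  finally have "G 1 - G 0 = 0" by (simp add: G_def)
  with fundamental_theorem_of_calculus[of 0 1 G, OF _ G'] False show ?thesis by simp
qed

lemma lborel_integral_exp_2pi_Ints:
  assumes "k \<in> \<int>"
  shows "(\<integral>t. indicator {0..1} t *\<^sub>R exp (\<i> * 2 * pi * complex_of_real (t * k)) \<partial>lborel)
           = (if k = 0 then 1 else 0)"
proof -
  obtain j where j: "k = of_int j" using assms Ints_cases by blast
  have "set_integrable lborel {0..1} (\<lambda>t. exp (\<i> * 2 * pi * complex_of_real (t * k)))"
    unfolding set_integrable_def by (rule borel_integrable_compact) (auto intro!: continuous_intros)
  from set_borel_integral_eq_integral(2)[OF this] integral_unique[OF has_integral_exp_2pi_int[of j]]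
  show ?thesis unfolding set_lebesgue_integral_def j by simp
qed

definition freq_vec :: "int^'n \<Rightarrow> real^'n" where
  "freq_vec \<eta> = (\<chi> i. real_of_int (\<eta>$i))"

lemma tinner_eq_sum_Basis: "tinner x \<eta> = (\<Sum>b\<in>Basis. (x \<bullet> b) * (freq_vec \<eta> \<bullet> b))"
proof -
  have "tinner x \<eta> = x \<bullet> freq_vec \<eta>" by (simp add: tinner_def inner_vec_def freq_vec_def)
  then show ?thesis using euclidean_inner[of x "freq_vec \<eta>"] by simp
qed

lemma freq_vec_inner_Basis_Ints: "b \<in> Basis \<Longrightarrow> freq_vec \<eta> \<bullet> b \<in> \<int>"
  by (auto simp: Basis_vec_def freq_vec_def cart_eq_inner_axis[symmetric])

lemma freq_vec_eq_0_iff: "freq_vec \<eta> = 0 \<longleftrightarrow> \<eta> = 0"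
  by (auto simp: freq_vec_def vec_eq_iff)

lemma tinner_diff: "tinner x (\<eta> - \<xi>) = tinner x \<eta> - tinner x \<xi>"
  by (simp add: tinner_def sum_subtractf[symmetric] algebra_simps)

lemma indicator_unit_cube_prod:
  "indicator (cbox (0::'a::euclidean_space) One) x = (\<Prod>b\<in>Basis. indicator {0..1} (x \<bullet> b) :: real)"
proof (cases "x \<in> cbox 0 One")
  case False
  then obtain b where "b \<in> Basis" "\<not> (0 \<le> x \<bullet> b \<and> x \<bullet> b \<le> 1)" by (auto simp: mem_box)
  then show ?thesis using False by (auto intro!: prod_zero bexI[of _ b])
qed (auto simp: mem_box intro!: prod.neutral)

text \<open>The integral factors into one-dimensional integrals along the coordinate axes.\<close>

lemma integral_torus_character:
  fixes \<eta> :: "int^'n"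
  shows "integral (cbox 0 One) (\<lambda>x::real^'n. exp (\<i> * 2 * pi * complex_of_real (tinner x \<eta>)))
           = (if \<eta> = 0 then 1 else 0)"
proof -
  define E where "E x = exp (\<i> * 2 * pi * complex_of_real (tinner x \<eta>))" for x :: "real^'n"
  define g where "g b t = indicator {0..1} t *\<^sub>R exp (\<i> * 2 * pi * complex_of_real (t * (freq_vec \<eta> \<bullet> b)))"
    for b :: "real^'n" and t :: real
  have "continuous_on UNIV E" unfolding E_def tinner_def by (intro continuous_intros)
  then have "set_integrable lborel (cbox 0 One) E"
    unfolding set_integrable_def by (intro borel_integrable_compact) (auto intro: continuous_on_subset)
  then have "integral (cbox 0 One) E = (LINT x : cbox 0 One | lborel. E x)"
    by (simp add: set_borel_integral_eq_integral(2))
  also have "\<dots> = (\<integral>x. (\<Prod>b\<in>Basis. g b (x \<bullet> b)) \<partial>lborel)"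
    unfolding set_lebesgue_integral_def
  proof (rule Bochner_Integration.integral_cong[OF refl])
    fix x :: "real^'n"
    have "E x = (\<Prod>b\<in>Basis. exp (\<i> * 2 * pi * complex_of_real ((x \<bullet> b) * (freq_vec \<eta> \<bullet> b))))"
      unfolding E_def tinner_eq_sum_Basis
      by (simp add: sum_distrib_left exp_sum[symmetric])
    then show "indicator (cbox 0 One) x *\<^sub>R E x = (\<Prod>b\<in>Basis. g b (x \<bullet> b))"
      by (simp add: g_def indicator_unit_cube_prod scaleR_conv_of_real prod.distrib of_real_prod)
  qed
  also have "\<dots> = (\<Prod>b\<in>Basis. (\<integral>t. g b t \<partial>lborel))"
  proof (rule integral_lborel_prod)
    fix b :: "real^'n"
    show "g b \<in> borel_measurable borel" unfolding g_def by measurable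
    show "integrable lborel (g b)" unfolding g_def
      by (rule borel_integrable_compact) (auto intro!: continuous_intros)
  qed
  also have "\<dots> = (\<Prod>b\<in>(Basis::(real^'n) set). (if freq_vec \<eta> \<bullet> b = 0 then 1 else 0))"
    unfolding g_def by (intro prod.cong refl lborel_integral_exp_2pi_Ints freq_vec_inner_Basis_Ints)
  also have "\<dots> = (if \<eta> = 0 then 1 else 0)"
  proof (cases "\<eta> = 0")
    case False
    then obtain b :: "real^'n" where "b \<in> Basis" "freq_vec \<eta> \<bullet> b \<noteq> 0"
      using euclidean_all_zero_iff freq_vec_eq_0_iff by blast
    then show ?thesis using False by (auto intro!: prod_zero bexI[of _ b])
  qed (simp add: freq_vec_def zero_vec_def[symmetric])
  finally show ?thesis unfolding E_def .
qed

section \<open>Dyadic blocks of frequencies\<close>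

lemma int_box_subset_image_PiE:
  "{\<xi>::int^'n. \<forall>i. \<bar>\<xi>$i\<bar> \<le> K} \<subseteq> vec_lambda ` (PiE UNIV (\<lambda>_. {-K..K}))"
proof
  fix \<xi> :: "int^'n" assume "\<xi> \<in> {\<xi>. \<forall>i. \<bar>\<xi>$i\<bar> \<le> K}"
  then have "vec_nth \<xi> \<in> PiE UNIV (\<lambda>_. {-K..K})" by (auto simp: abs_le_iff) (metis minus_le_iff)
  then show "\<xi> \<in> vec_lambda ` (PiE UNIV (\<lambda>_. {-K..K}))" by (rule rev_image_eqI) simp
qed

lemma finite_int_box: "finite {\<xi>::int^'n. \<forall>i. \<bar>\<xi>$i\<bar> \<le> K}"
  by (rule finite_subset[OF int_box_subset_image_PiE]) (intro finite_imageI finite_PiE, auto)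

lemma card_int_box: "card {\<xi>::int^'n. \<forall>i. \<bar>\<xi>$i\<bar> \<le> K} \<le> (nat (2*K+1)) ^ CARD('n)"
proof -
  have "card {\<xi>::int^'n. \<forall>i. \<bar>\<xi>$i\<bar> \<le> K} \<le> card (vec_lambda ` (PiE (UNIV::'n set) (\<lambda>_. {-K..K})))"
    by (intro card_mono finite_imageI finite_PiE int_box_subset_image_PiE) auto
  also have "\<dots> \<le> card (PiE (UNIV::'n set) (\<lambda>_. {-K..K}))"
    by (rule card_image_le) (intro finite_PiE, auto)
  also have "\<dots> = (nat (2*K+1)) ^ CARD('n)" by (simp add: card_PiE)
  finally show ?thesis .
qed

lemma inorm_nonneg: "0 \<le> inorm \<xi>"
  unfolding inorm_def by (simp add: sum_nonneg)

lemma abs_component_le_inorm: "real_of_int \<bar>\<xi>$i\<bar> \<le> inorm \<xi>"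
proof -
  have "real_of_int \<bar>\<xi>$i\<bar> = sqrt ((real_of_int (\<xi>$i))^2)" by simp
  also have "\<dots> \<le> inorm \<xi>" unfolding inorm_def
    by (rule real_sqrt_le_mono) (rule member_le_sum, auto)
  finally show ?thesis .
qed

lemma jbracket_ge_1: "1 \<le> jbracket \<xi>"
  unfolding jbracket_def by simp

lemma inorm_le_jbracket: "inorm \<xi> \<le> jbracket \<xi>"
  unfolding jbracket_def using real_sqrt_le_mono[of "(inorm \<xi>)^2" "1 + (inorm \<xi>)^2"] inorm_nonneg[of \<xi>]
  by simp

lemma dyadic_block_subset_int_box: "dyadic_block m \<subseteq> {\<xi>::int^'n. \<forall>i. \<bar>\<xi>$i\<bar> \<le> 2^(m+1)}"
proof safe
  fix \<xi> :: "int^'n" and i assume "\<xi> \<in> dyadic_block m"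
  then have "real_of_int \<bar>\<xi>$i\<bar> \<le> 2^(m+1)"
    using abs_component_le_inorm[of \<xi> i] by (simp add: dyadic_block_def)
  then show "\<bar>\<xi>$i\<bar> \<le> 2^(m+1)" by (metis of_int_le_iff of_int_numeral of_int_power)
qed

lemma finite_dyadic_block [simp]: "finite (dyadic_block m)"
  using finite_subset[OF dyadic_block_subset_int_box finite_int_box] .

lemma card_dyadic_block:
  "real (card (dyadic_block k :: (int^'n) set)) \<le> 2 powr ((real k + 3) * real CARD('n))"
proof -
  have "card (dyadic_block k :: (int^'n) set) \<le> card {\<xi>::int^'n. \<forall>i. \<bar>\<xi>$i\<bar> \<le> 2^(k+1)}"
    by (rule card_mono[OF finite_int_box dyadic_block_subset_int_box])
  also have "\<dots> \<le> (nat (2*2^(k+1)+1)) ^ CARD('n)" by (rule card_int_box)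
  also have "\<dots> \<le> (2^(k+3)) ^ CARD('n)"
  proof (rule power_mono)
    have "(2::int)*2^(k+1)+1 \<le> 2^(k+3)"
      by (simp add: power_add) (use one_le_power[of "2::int" k] in linarith)
    then show "nat (2*2^(k+1)+1) \<le> 2^(k+3)" by (simp add: nat_le_iff)
  qed simp
  finally have "real (card (dyadic_block k :: (int^'n) set)) \<le> 2 ^ ((k+3) * CARD('n))"
    by (metis of_nat_le_iff of_nat_numeral of_nat_power power_mult)
  also have "\<dots> = 2 powr ((real k + 3) * real CARD('n))"
    by (simp add: powr_realpow[symmetric])
  finally show ?thesis .
qed

lemma ex_dyadic_block: "\<exists>m. \<xi> \<in> dyadic_block m"
proof -
  obtain k where k: "inorm \<xi> < 2 ^ k" using real_arch_pow[of 2 "inorm \<xi>"] by auto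
  have "(2::real) ^ k \<le> 2 ^ (k + 1)" by (intro power_increasing) auto
  with k have k1: "inorm \<xi> < 2 ^ (k + 1)" by linarith
  define m where "m = (LEAST m. inorm \<xi> < 2 ^ (m + 1))"
  have m: "inorm \<xi> < 2 ^ (m + 1)" unfolding m_def by (rule LeastI[of "\<lambda>m. inorm \<xi> < 2 ^ (m + 1)" k]) (rule k1)
  show ?thesis
  proof (cases m)
    case (Suc j)
    then have "\<not> inorm \<xi> < 2 ^ (j + 1)" unfolding m_def by (metis lessI not_less_Least)
    then show ?thesis using m Suc by (auto simp: dyadic_block_def intro!: exI[of _ m])
  qed (use m in \<open>auto simp: dyadic_block_def\<close>)
qed

lemma dyadic_block_unique:
  assumes "\<xi> \<in> dyadic_block m" and "\<xi> \<in> dyadic_block m'"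
  shows "m = m'"
proof -
  have False if "\<xi> \<in> dyadic_block k" "\<xi> \<in> dyadic_block k'" "k < k'" for k k'
  proof -
    have "(2::real)^(k+1) \<le> 2^k'" using that(3) by (intro power_increasing) auto
    then show False using that by (auto simp: dyadic_block_def)
  qed
  then show ?thesis using assms by (metis linorder_neqE_nat)
qed

definition block_index :: "int^'n \<Rightarrow> nat" where
  "block_index \<xi> = (THE m. \<xi> \<in> dyadic_block m)"

lemma mem_dyadic_block_index: "\<xi> \<in> dyadic_block (block_index \<xi>)"
  unfolding block_index_def
  by (rule theI') (use ex_dyadic_block[of \<xi>] dyadic_block_unique in blast)

lemma block_index_eq: "\<xi> \<in> dyadic_block m \<Longrightarrow> block_index \<xi> = m"
  using mem_dyadic_block_index dyadic_block_unique by blast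

lemma dyadic_block_jbracket: "\<xi> \<in> dyadic_block m \<Longrightarrow> 2^m \<le> 2 * jbracket \<xi>"
  using jbracket_ge_1[of \<xi>] inorm_le_jbracket[of \<xi>] by (cases m) (auto simp: dyadic_block_def)

definition dyadic_ball :: "nat \<Rightarrow> (int^'n) set" where
  "dyadic_ball M = (\<Union>m<M. dyadic_block m)"

lemma finite_dyadic_ball [simp]: "finite (dyadic_ball M)"
  unfolding dyadic_ball_def by auto

lemma mem_dyadic_ball_iff: "\<xi> \<in> dyadic_ball M \<longleftrightarrow> block_index \<xi> < M"
  unfolding dyadic_ball_def using mem_dyadic_block_index block_index_eq by blast

lemma sum_dyadic_ball:
  "(\<Sum>\<xi>\<in>dyadic_ball M \<inter> S. g \<xi>) = (\<Sum>m<M. \<Sum>\<xi>\<in>dyadic_block m \<inter> S. g \<xi>)"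
proof -
  have "dyadic_ball M \<inter> S = (\<Union>m\<in>{..<M}. dyadic_block m \<inter> S)" unfolding dyadic_ball_def by auto
  moreover have "(\<Sum>\<xi>\<in>(\<Union>m\<in>{..<M}. dyadic_block m \<inter> S). g \<xi>) = (\<Sum>m<M. \<Sum>\<xi>\<in>dyadic_block m \<inter> S. g \<xi>)"
    by (rule sum.UNION_disjoint) (use dyadic_block_unique in auto)
  ultimately show ?thesis by simp
qed

lemma eventually_mem_dyadic_ball: "eventually (\<lambda>M. \<xi> \<in> dyadic_ball M) sequentially"
  using eventually_gt_at_top[of "block_index \<xi>"] by (rule eventually_mono) (simp add: mem_dyadic_ball_iff)

lemma has_sum_imp_tendsto_exhaustion:
  assumes "(f has_sum s) S" and "\<And>N. finite (F N)" and "\<And>N. F N \<subseteq> S"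
    and "\<And>x. x \<in> S \<Longrightarrow> eventually (\<lambda>N. x \<in> F N) sequentially"
  shows "(\<lambda>N. sum f (F N)) \<longlonglongrightarrow> s"
proof -
  have lim: "filterlim F (finite_subsets_at_top S) sequentially"
    unfolding filterlim_finite_subsets_at_top
  proof safe
    fix X assume X: "finite X" "X \<subseteq> S"
    have "eventually (\<lambda>N. \<forall>x\<in>X. x \<in> F N) sequentially"
      using X assms(4) by (intro eventually_ball_finite) auto
    then show "eventually (\<lambda>N. finite (F N) \<and> X \<subseteq> F N \<and> F N \<subseteq> S) sequentially"
      by (rule eventually_mono) (use assms(2,3) in auto)
  qed
  from assms(1) have "(sum f \<longlongrightarrow> s) (finite_subsets_at_top S)" unfolding has_sum_def .
  from filterlim_compose[OF this lim] show ?thesis .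
qed

lemma sums_dyadic_blocks:
  fixes g :: "int^'n \<Rightarrow> 'b::banach"
  assumes "g summable_on S"
  shows "(\<lambda>m. \<Sum>\<xi>\<in>dyadic_block m \<inter> S. g \<xi>) sums (infsum g S)"
  unfolding sums_def sum_dyadic_ball[symmetric]
  by (rule has_sum_imp_tendsto_exhaustion[where S=S])
     (use assms eventually_mem_dyadic_ball in \<open>auto elim: eventually_mono\<close>)

lemma summable_on_of_summable_dyadic_blocks:
  fixes g :: "int^'n \<Rightarrow> real"
  assumes g0: "\<And>x. 0 \<le> g x" and sm: "summable (\<lambda>m. \<Sum>\<xi>\<in>dyadic_block m. g \<xi>)"
  shows "g summable_on UNIV"
proof (rule nonneg_bdd_above_summable_on)
  show "bdd_above (sum g ` {F. F \<subseteq> UNIV \<and> finite F})"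
  proof (rule bdd_aboveI2)
    fix F :: "(int^'n) set" assume "F \<in> {F. F \<subseteq> UNIV \<and> finite F}"
    then have F: "finite F" by auto
    define M where "M = Suc (Max (insert 0 (block_index ` F)))"
    have "F \<subseteq> dyadic_ball M"
      using F by (auto simp: mem_dyadic_ball_iff M_def less_Suc_eq_le)
    then have "sum g F \<le> sum g (dyadic_ball M)" by (intro sum_mono2) (auto simp: g0)
    also have "\<dots> = (\<Sum>m<M. \<Sum>\<xi>\<in>dyadic_block m. g \<xi>)"
      using sum_dyadic_ball[where M=M and S=UNIV and g=g] by simp
    also have "\<dots> \<le> (\<Sum>m. \<Sum>\<xi>\<in>dyadic_block m. g \<xi>)"
      by (rule sum_le_suminf[OF sm]) (auto intro!: sum_nonneg g0)
    finally show "sum g F \<le> (\<Sum>m. \<Sum>\<xi>\<in>dyadic_block m. g \<xi>)" .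
  qed
qed (rule g0)

section \<open>Absolute summability of the symbol\<close>

lemma symbol_bound_const_nonneg:
  fixes a :: "int^'n \<Rightarrow> 'a::real_normed_vector"
  assumes "\<forall>\<xi>. norm (a \<xi>) \<le> C * jbracket \<xi> powr m"
  shows "0 \<le> C"
proof -
  have "norm (a 0) \<le> C * jbracket (0::int^'n) powr m" using assms by blast
  then have "0 \<le> C * jbracket (0::int^'n) powr m" using norm_ge_zero[of "a 0"] by linarith
  moreover have "0 < jbracket (0::int^'n) powr m" using jbracket_ge_1[of "0::int^'n"] by simp
  ultimately show ?thesis by (simp add: zero_le_mult_iff)
qed

lemma sum_dyadic_block_symbol_le:
  fixes a :: "int^'n \<Rightarrow> 'a::real_normed_vector"
  assumes bound: "\<forall>\<xi>. norm (a \<xi>) \<le> C * jbracket \<xi> powr m" and "m \<le> 0"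
  shows "(\<Sum>\<xi>\<in>dyadic_block k. norm (a \<xi>))
           \<le> C * 2 powr (3 * real CARD('n) - m) * (2 powr (m + real CARD('n))) ^ k"
proof -
  have C0: "0 \<le> C" using symbol_bound_const_nonneg[OF bound] .
  have "norm (a \<xi>) \<le> C * 2 powr ((real k - 1) * m)" if "\<xi> \<in> dyadic_block k" for \<xi>
  proof -
    have "2 powr (real k - 1) \<le> jbracket \<xi>"
      using dyadic_block_jbracket[OF that] by (simp add: powr_diff powr_realpow)
    then have "jbracket \<xi> powr m \<le> (2 powr (real k - 1)) powr m"
      using \<open>m \<le> 0\<close> by (intro powr_mono2') auto
    then have "C * jbracket \<xi> powr m \<le> C * 2 powr ((real k - 1) * m)"
      unfolding powr_powr using C0 by (rule mult_left_mono)
    with bound show ?thesis by (meson order_trans)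
  qed
  then have "(\<Sum>\<xi>\<in>dyadic_block k. norm (a \<xi>))
               \<le> real (card (dyadic_block k :: (int^'n) set)) * (C * 2 powr ((real k - 1) * m))"
    using sum_bounded_above[of "dyadic_block k" "\<lambda>\<xi>. norm (a \<xi>)"] by auto
  also have "\<dots> \<le> 2 powr ((real k + 3) * real CARD('n)) * (C * 2 powr ((real k - 1) * m))"
    using C0 by (intro mult_right_mono card_dyadic_block) auto
  also have "\<dots> = C * 2 powr ((3 * real CARD('n) - m) + real k * (m + real CARD('n)))"
  proof -
    have "(real k + 3) * real CARD('n) + (real k - 1) * m
            = (3 * real CARD('n) - m) + real k * (m + real CARD('n))"
      by (simp add: algebra_simps)
    then show ?thesis by (metis powr_add mult.left_commute)
  qed
  also have "\<dots> = C * 2 powr (3 * real CARD('n) - m) * (2 powr (m + real CARD('n))) ^ k"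
    unfolding powr_add[of 2 "3 * real CARD('n) - m"] by (simp add: powr_power mult.assoc)
  finally show ?thesis .
qed

text \<open>Each dyadic shell contains \<open>O(2\<^sup>k\<^sup>n)\<close> frequencies, on which \<open>|a|\<close> is
  \<open>O(2\<^sup>k\<^sup>m)\<close>; for \<open>m < -n\<close> the shell sums decay geometrically.\<close>

lemma abs_summable_symbol:
  fixes a :: "int^'n \<Rightarrow> 'a::real_normed_vector"
  assumes bound: "\<forall>\<xi>. norm (a \<xi>) \<le> C * jbracket \<xi> powr m" and m: "m < - real CARD('n)"
  shows "(\<lambda>\<xi>. norm (a \<xi>)) summable_on UNIV"
proof (rule summable_on_of_summable_dyadic_blocks)
  have "0 < 2 powr (m + real CARD('n))" "2 powr (m + real CARD('n)) < (1::real)"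
    using m by (auto intro!: powr_less_one)
  then have "summable (\<lambda>k. C * 2 powr (3 * real CARD('n) - m) * (2 powr (m + real CARD('n))) ^ k)"
    by (intro summable_mult summable_geometric) simp
  then show "summable (\<lambda>k. \<Sum>\<xi>\<in>dyadic_block k. norm (a \<xi>))"
    using sum_dyadic_block_symbol_le[OF bound] m
    by (elim summable_comparison_test'[where N=0]) (auto simp: sum_nonneg)
qed simp

section \<open>\<open>L\<^sup>p\<close> norms on the torus\<close>

lemma torus_Lp_norm_nonneg: "0 \<le> torus_Lp_norm p f"
  unfolding torus_Lp_norm_def by simp

lemma torus_Lp_norm_zero: "0 < p \<Longrightarrow> torus_Lp_norm p (\<lambda>x. 0) = 0"
  unfolding torus_Lp_norm_def by simp

lemma continuous_on_norm_powr:
  "0 < p \<Longrightarrow> continuous_on S f \<Longrightarrow> continuous_on S (\<lambda>x. norm (f x) powr p)"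
  by (intro continuous_on_powr' continuous_intros) auto

lemma torus_Lp_norm_le_const:
  assumes p: "0 < p" and f: "continuous_on (cbox 0 One) f" and S0: "0 \<le> S"
    and S: "\<And>x. x \<in> cbox 0 One \<Longrightarrow> norm (f x) \<le> S"
  shows "torus_Lp_norm p (f :: real^'n \<Rightarrow> complex) \<le> S"
proof -
  have int: "(\<lambda>x. norm (f x) powr p) integrable_on cbox 0 One"
    by (intro integrable_continuous continuous_on_norm_powr p f)
  have "integral (cbox 0 One) (\<lambda>x. norm (f x) powr p) \<le> integral (cbox (0::real^'n) One) (\<lambda>x. S powr p)"
    using p by (intro integral_le int) (auto intro!: powr_mono2 S)
  then have "integral (cbox 0 One) (\<lambda>x. norm (f x) powr p) \<le> S powr p"
    by (simp add: content_cbox_if)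
  moreover have "0 \<le> integral (cbox 0 One) (\<lambda>x. norm (f x) powr p)"
    by (rule integral_nonneg[OF int]) simp
  ultimately have "torus_Lp_norm p f \<le> (S powr p) powr (1/p)"
    unfolding torus_Lp_norm_def using p by (intro powr_mono2) auto
  also have "\<dots> = S" using p S0 by (simp add: powr_powr)
  finally show ?thesis .
qed

lemma Young_bound_scaled:
  fixes p lam t :: real
  assumes p: "1 < p" and lam: "0 < lam" and t: "0 \<le> t"
  shows "t \<le> t powr p / (p * lam powr (p - 1)) + lam * (1 - 1/p)"
proof -
  define q where "q = p / (p - 1)"
  have "0 < p - 1" using p by simp
  then have q: "q > 1" "1/p + 1/q = 1" unfolding q_def by (auto simp: field_simps)
  have "(t / lam) * 1 \<le> (t / lam) powr p / p + 1 powr q / q"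
    by (rule Youngs_inequality) (use p q lam t in auto)
  then have "t / lam \<le> (t / lam) powr p / p + (1 - 1/p)" using q by simp
  then have "t \<le> lam * ((t / lam) powr p / p) + lam * (1 - 1/p)"
    using lam by (simp add: field_simps)
  moreover have "lam * ((t / lam) powr p / p) = t powr p / (p * lam powr (p - 1))"
    using lam p t by (simp add: powr_divide powr_diff field_simps)
  ultimately show ?thesis by simp
qed

text \<open>Integrating Young's inequality with parameter \<open>\<lambda>\<close> gives
  \<open>\<parallel>f\<parallel>\<^sub>1 \<le> \<lambda>\<close> for every \<open>\<lambda> > \<parallel>f\<parallel>\<^sub>p\<close>.\<close>

lemma integral_norm_le_torus_Lp_norm:
  assumes p: "1 < p" and f: "continuous_on (cbox 0 One) (f :: real^'n \<Rightarrow> complex)"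
  shows "integral (cbox 0 One) (\<lambda>x. norm (f x)) \<le> torus_Lp_norm p f"
proof (rule dense_ge)
  define J where "J = integral (cbox 0 One) (\<lambda>x. norm (f x) powr p)"
  have fp: "continuous_on (cbox 0 One) (\<lambda>x. norm (f x) powr p)"
    using p by (intro continuous_on_norm_powr f) auto
  have J0: "0 \<le> J" unfolding J_def by (rule integral_nonneg) (auto intro!: integrable_continuous fp)
  fix lam assume lam: "torus_Lp_norm p f < lam"
  then have lam0: "0 < lam" using torus_Lp_norm_nonneg[of p f] by linarith
  have "J = torus_Lp_norm p f powr p" unfolding J_def torus_Lp_norm_def
    using J0 p by (simp add: powr_powr J_def)
  also have "\<dots> \<le> lam powr p" using p lam by (intro powr_mono2) (auto simp: torus_Lp_norm_nonneg)
  also have "\<dots> = lam * lam powr (p - 1)" using lam0 by (simp add: powr_diff)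
  finally have J_le: "J / (p * lam powr (p - 1)) \<le> lam / p" using lam0 p by (simp add: field_simps)
  have "integral (cbox 0 One) (\<lambda>x. norm (f x))
          \<le> integral (cbox 0 One) (\<lambda>x. norm (f x) powr p / (p * lam powr (p - 1)) + lam * (1 - 1/p))"
    using p lam0
    by (intro integral_le Young_bound_scaled) (auto intro!: integrable_continuous fp f continuous_intros)
  also have "\<dots> = J / (p * lam powr (p - 1)) + lam * (1 - 1/p)"
    unfolding J_def using p lam0
    by (subst integral_add) (auto intro!: integrable_continuous fp continuous_intros simp: content_cbox_if)
  also have "\<dots> \<le> lam" using J_le p by (simp add: field_simps)
  finally show "integral (cbox 0 One) (\<lambda>x. norm (f x)) \<le> lam" .
qed

lemma torus_Lp_norm_scale:
  assumes "0 < p"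
  shows "torus_Lp_norm p (\<lambda>x. s * f x) = norm s * torus_Lp_norm p f"
proof -
  have "integral (cbox 0 One) (\<lambda>x. norm (s * f x) powr p)
          = norm s powr p * integral (cbox 0 One) (\<lambda>x. norm (f x) powr p)"
    by (simp add: norm_mult powr_mult)
  then show ?thesis unfolding torus_Lp_norm_def using assms by (simp add: powr_mult powr_powr)
qed

lemma norm_add_powr_le:
  fixes u v :: "'a::real_normed_vector"
  assumes "0 < p"
  shows "norm (u + v) powr p \<le> 2 powr p * (norm u powr p + norm v powr p)"
proof -
  have "norm (u + v) \<le> 2 * max (norm u) (norm v)"
    using norm_triangle_ineq[of u v] by linarith
  then have "norm (u + v) powr p \<le> (2 * max (norm u) (norm v)) powr p"
    using assms by (intro powr_mono2) auto
  also have "\<dots> = 2 powr p * max (norm u) (norm v) powr p" by (simp add: powr_mult)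
  also have "max (norm u) (norm v) powr p \<le> norm u powr p + norm v powr p"
    by (simp add: max_def)
  finally show ?thesis by simp
qed

lemma powr_add_le_sum:
  fixes A B :: real
  assumes "0 \<le> A" "0 \<le> B" "1 \<le> p"
  shows "(A + B) powr (1/p) \<le> 2 * (A powr (1/p) + B powr (1/p))"
proof -
  have two: "(2::real) powr (1/p) \<le> 2" using assms powr_mono[of "1/p" 1 2] by simp
  have "(A + B) powr (1/p) \<le> (2 * max A B) powr (1/p)" using assms by (intro powr_mono2) auto
  also have "\<dots> = 2 powr (1/p) * max A B powr (1/p)" by (simp add: powr_mult)
  also have "\<dots> \<le> 2 * max A B powr (1/p)" using two by (intro mult_right_mono) auto
  also have "max A B powr (1/p) \<le> A powr (1/p) + B powr (1/p)" by (simp add: max_def)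
  finally show ?thesis by simp
qed

text \<open>A quasi-triangle inequality; the constant is irrelevant for the argument.\<close>

lemma torus_Lp_norm_add_le:
  assumes p: "1 < p" and f: "continuous_on (cbox 0 One) f" and g: "continuous_on (cbox 0 One) g"
  shows "torus_Lp_norm p (\<lambda>x::real^'n. f x + g x) \<le> 4 * (torus_Lp_norm p f + torus_Lp_norm p g)"
proof -
  define A where "A = integral (cbox 0 One) (\<lambda>x::real^'n. norm (f x) powr p)"
  define B where "B = integral (cbox 0 One) (\<lambda>x::real^'n. norm (g x) powr p)"
  have fp: "continuous_on (cbox 0 One) (\<lambda>x. norm (f x) powr p)"
    and gp: "continuous_on (cbox 0 One) (\<lambda>x. norm (g x) powr p)"
    and fgp: "continuous_on (cbox 0 One) (\<lambda>x. norm (f x + g x) powr p)"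
    using p by (auto intro!: continuous_on_norm_powr continuous_intros f g)
  have A0: "0 \<le> A" unfolding A_def by (rule integral_nonneg) (auto intro!: integrable_continuous fp)
  have B0: "0 \<le> B" unfolding B_def by (rule integral_nonneg) (auto intro!: integrable_continuous gp)
  have "integral (cbox 0 One) (\<lambda>x::real^'n. norm (f x + g x) powr p)
          \<le> integral (cbox 0 One) (\<lambda>x::real^'n. 2 powr p * (norm (f x) powr p + norm (g x) powr p))"
    using p by (intro integral_le norm_add_powr_le)
      (auto intro!: integrable_continuous fp gp fgp continuous_intros)
  also have "\<dots> = 2 powr p * (A + B)" unfolding A_def B_def
    by (subst integral_mult[symmetric])
       (auto intro!: integrable_continuous fp gp continuous_intros integral_add)
  finally have "torus_Lp_norm p (\<lambda>x::real^'n. f x + g x) \<le> (2 powr p * (A + B)) powr (1/p)"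
    unfolding torus_Lp_norm_def using p
    by (intro powr_mono2) (auto intro!: integral_nonneg integrable_continuous fgp)
  also have "\<dots> = 2 * (A + B) powr (1/p)" using p A0 B0 by (simp add: powr_mult powr_powr)
  also have "(A + B) powr (1/p) \<le> 2 * (torus_Lp_norm p f + torus_Lp_norm p g)"
    unfolding torus_Lp_norm_def A_def[symmetric] B_def[symmetric] using A0 B0 p
    by (intro powr_add_le_sum) auto
  finally show ?thesis by simp
qed

section \<open>Fourier coefficients of a dyadic block\<close>

lemma continuous_on_trig_block: "continuous_on S (trig_block m c)"
  unfolding trig_block_def tinner_def by (intro continuous_intros)

lemma trig_block_scale: "trig_block m (\<lambda>\<xi>. s * c \<xi>) x = s * trig_block m c x"
  unfolding trig_block_def by (simp add: sum_distrib_left mult_ac)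

lemma trig_block_add: "trig_block m (\<lambda>\<xi>. c \<xi> + d \<xi>) x = trig_block m c x + trig_block m d x"
  unfolding trig_block_def by (simp add: sum.distrib distrib_left)

lemma trig_block_eq_0: "(\<And>\<xi>. \<xi> \<in> dyadic_block m \<Longrightarrow> c \<xi> = 0) \<Longrightarrow> trig_block m c = (\<lambda>x. 0)"
  unfolding trig_block_def by (auto intro!: ext sum.neutral)

lemma fourier_coeff_trig_block:
  assumes "\<xi> \<in> dyadic_block m"
  shows "integral (cbox 0 One)
           (\<lambda>x::real^'n. trig_block m c x * exp (- (\<i> * 2 * pi * complex_of_real (tinner x \<xi>)))) = c \<xi>"
proof -
  have "trig_block m c x * exp (- (\<i> * 2 * pi * complex_of_real (tinner x \<xi>)))
          = (\<Sum>\<eta>\<in>dyadic_block m. c \<eta> * exp (\<i> * 2 * pi * complex_of_real (tinner x (\<eta> - \<xi>))))" for x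
    unfolding trig_block_def sum_distrib_right tinner_diff
    by (intro sum.cong refl) (simp add: exp_diff[symmetric] exp_minus field_simps)
  then have "integral (cbox 0 One)
               (\<lambda>x::real^'n. trig_block m c x * exp (- (\<i> * 2 * pi * complex_of_real (tinner x \<xi>))))
     = (\<Sum>\<eta>\<in>dyadic_block m. c \<eta> * integral (cbox 0 One)
               (\<lambda>x::real^'n. exp (\<i> * 2 * pi * complex_of_real (tinner x (\<eta> - \<xi>)))))"
    by (simp add: integral_sum integrable_continuous continuous_intros tinner_def)
  also have "\<dots> = c \<xi>"
    using assms by (simp add: integral_torus_character if_distrib cong: if_cong)
  finally show ?thesis .
qed

lemma norm_coeff_le_torus_Lp_norm:
  assumes p: "1 < p" and "\<xi> \<in> dyadic_block m"
  shows "norm (c \<xi>) \<le> torus_Lp_norm p (trig_block m c :: real^'n \<Rightarrow> complex)"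
proof -
  have "norm (c \<xi>) = norm (integral (cbox 0 One)
          (\<lambda>x::real^'n. trig_block m c x * exp (- (\<i> * 2 * pi * complex_of_real (tinner x \<xi>)))))"
    using fourier_coeff_trig_block[OF assms(2)] by simp
  also have "\<dots> \<le> integral (cbox 0 One) (\<lambda>x::real^'n. norm (trig_block m c x))"
    by (rule integral_norm_bound_integral)
       (auto intro!: integrable_continuous continuous_intros continuous_on_trig_block
             simp: tinner_def norm_mult)
  also have "\<dots> \<le> torus_Lp_norm p (trig_block m c :: real^'n \<Rightarrow> complex)"
    by (rule integral_norm_le_torus_Lp_norm[OF p continuous_on_trig_block])
  finally show ?thesis .
qed

lemma torus_Lp_norm_trig_block_le:
  assumes "0 < p"
  shows "torus_Lp_norm p (trig_block m d :: real^'n \<Rightarrow> complex) \<le> (\<Sum>\<xi>\<in>dyadic_block m. norm (d \<xi>))"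
proof (rule torus_Lp_norm_le_const[OF assms continuous_on_trig_block])
  show "norm (trig_block m d x) \<le> (\<Sum>\<xi>\<in>dyadic_block m. norm (d \<xi>))" for x :: "real^'n"
    unfolding trig_block_def by (rule order_trans[OF norm_sum]) (simp add: norm_mult)
qed (simp add: sum_nonneg)

section \<open>Besov spaces with \<open>q = 2\<close>\<close>

definition besov_block_norm :: "real \<Rightarrow> real \<Rightarrow> (int^'n \<Rightarrow> complex) \<Rightarrow> nat \<Rightarrow> real" where
  "besov_block_norm w p c m = 2 powr (real m * w) * torus_Lp_norm p (trig_block m c :: real^'n \<Rightarrow> complex)"

lemma besov_block_norm_nonneg: "0 \<le> besov_block_norm w p c m"
  unfolding besov_block_norm_def by (simp add: torus_Lp_norm_nonneg)

lemma besov_term_2_eq: "besov_term w p 2 c m = (besov_block_norm w p c m)^2"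
  unfolding besov_term_def besov_block_norm_def[symmetric]
  by (rule powr_numeral[OF besov_block_norm_nonneg])

lemma mem_besov_space_2_iff: "c \<in> besov_space w p 2 \<longleftrightarrow> summable (\<lambda>m. (besov_block_norm w p c m)^2)"
  unfolding besov_space_def besov_term_2_eq by simp

lemma besov_norm_2_eq:
  "c \<in> besov_space w p 2 \<Longrightarrow> besov_norm w p 2 c = sqrt (\<Sum>m. (besov_block_norm w p c m)^2)"
  unfolding besov_norm_def besov_term_2_eq mem_besov_space_2_iff
  by (subst powr_half_sqrt[symmetric]) (auto intro: suminf_nonneg)

lemma besov_norm_nonneg: "0 \<le> besov_norm w p q c"
  unfolding besov_norm_def by simp

lemma besov_block_norm_le_besov_norm:
  assumes "c \<in> besov_space w p 2"
  shows "besov_block_norm w p c m \<le> besov_norm w p 2 c"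
proof -
  have "summable (\<lambda>m. (besov_block_norm w p c m)^2)"
    using assms by (simp add: mem_besov_space_2_iff)
  from sum_le_suminf[OF this, of "{m}"]
  have "(besov_block_norm w p c m)^2 \<le> (\<Sum>m. (besov_block_norm w p c m)^2)" by simp
  then have "sqrt ((besov_block_norm w p c m)^2) \<le> sqrt (\<Sum>m. (besov_block_norm w p c m)^2)"
    by (rule real_sqrt_le_mono)
  then show ?thesis using besov_norm_2_eq[OF assms] besov_block_norm_nonneg[of w p c m] by simp
qed

text \<open>The coordinate functionals are continuous on \<open>B\<^sup>w\<^sub>p\<^sub>,\<^sub>2\<close>, because a Fourier
  coefficient is dominated by the \<open>L\<^sup>1\<close> norm, hence by the \<open>L\<^sup>p\<close> norm, of its block.\<close>

lemma coeff_weight_le_besov_norm: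
  assumes p: "1 < p" and c: "c \<in> besov_space w p 2"
  shows "norm (c \<xi>) * 2 powr (real (block_index \<xi>) * w) \<le> besov_norm w p 2 c"
proof -
  have "norm (c \<xi>) * 2 powr (real (block_index \<xi>) * w) \<le> besov_block_norm w p c (block_index \<xi>)"
    unfolding besov_block_norm_def
    using norm_coeff_le_torus_Lp_norm[OF p mem_dyadic_block_index, of c \<xi>] by (simp add: mult.commute)
  also have "\<dots> \<le> besov_norm w p 2 c" by (rule besov_block_norm_le_besov_norm[OF c])
  finally show ?thesis .
qed

lemma norm_coeff_le_besov_norm:
  assumes "1 < p" and "c \<in> besov_space w p 2"
  shows "norm (c \<xi>) \<le> 2 powr (- (real (block_index \<xi>) * w)) * besov_norm w p 2 c"
  using coeff_weight_le_besov_norm[OF assms, of \<xi>] by (simp add: powr_minus field_simps)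

lemma besov_norm_le_suminf:
  assumes le: "\<And>m. besov_block_norm w p d m \<le> t m" and t0: "\<And>m. 0 \<le> t m" and t: "summable t"
  shows "d \<in> besov_space w p 2" and "besov_norm w p 2 d \<le> suminf t"
proof -
  define T where "T = suminf t"
  have tT: "t m \<le> T" for m unfolding T_def using sum_le_suminf[OF t, of "{m}"] t0 by simp
  have sq: "(besov_block_norm w p d m)^2 \<le> T * t m" for m
  proof -
    have "(besov_block_norm w p d m)^2 \<le> (t m)^2"
      using le besov_block_norm_nonneg by (intro power_mono) auto
    also have "\<dots> \<le> T * t m" using tT t0 by (simp add: power2_eq_square mult_right_mono)
    finally show ?thesis .
  qed
  have sT: "summable (\<lambda>m. T * t m)" using t by (rule summable_mult)
  have sd: "summable (\<lambda>m. (besov_block_norm w p d m)^2)"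
    by (rule summable_comparison_test[OF _ sT]) (use sq in auto)
  then show d: "d \<in> besov_space w p 2" by (simp add: mem_besov_space_2_iff)
  have "(\<Sum>m. (besov_block_norm w p d m)^2) \<le> (\<Sum>m. T * t m)" by (rule suminf_le[OF sq sd sT])
  also have "\<dots> = T^2" using suminf_mult[OF t, of T] by (simp add: T_def power2_eq_square)
  finally have "besov_norm w p 2 d \<le> sqrt (T^2)"
    unfolding besov_norm_2_eq[OF d] by (rule real_sqrt_le_mono)
  moreover have "0 \<le> T" using tT[of 0] t0[of 0] by linarith
  ultimately show "besov_norm w p 2 d \<le> suminf t" by (simp add: T_def)
qed

lemma besov_block_norm_scale:
  "0 < p \<Longrightarrow> besov_block_norm w p (\<lambda>\<xi>. s * c \<xi>) m = norm s * besov_block_norm w p c m"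
  unfolding besov_block_norm_def trig_block_scale by (simp add: torus_Lp_norm_scale[where f="trig_block m c"])

lemma besov_space_scale:
  "0 < p \<Longrightarrow> c \<in> besov_space w p 2 \<Longrightarrow> (\<lambda>\<xi>. s * c \<xi>) \<in> besov_space w p 2"
  unfolding mem_besov_space_2_iff besov_block_norm_scale by (simp add: power_mult_distrib summable_mult)

lemma besov_norm_scale:
  "0 < p \<Longrightarrow> c \<in> besov_space w p 2 \<Longrightarrow> besov_norm w p 2 (\<lambda>\<xi>. s * c \<xi>) = norm s * besov_norm w p 2 c"
  using besov_space_scale[of p c w s]
  by (simp add: besov_norm_2_eq besov_block_norm_scale power_mult_distrib suminf_mult
                mem_besov_space_2_iff real_sqrt_mult)

lemma besov_block_norm_add_le:
  fixes c d :: "int^'n \<Rightarrow> complex"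
  assumes "1 < p"
  shows "besov_block_norm w p (\<lambda>\<xi>. c \<xi> + d \<xi>) m \<le> 4 * (besov_block_norm w p c m + besov_block_norm w p d m)"
proof -
  have "torus_Lp_norm p (trig_block m (\<lambda>\<xi>. c \<xi> + d \<xi>) :: real^'n \<Rightarrow> complex)
          \<le> 4 * (torus_Lp_norm p (trig_block m c :: real^'n \<Rightarrow> complex)
                 + torus_Lp_norm p (trig_block m d :: real^'n \<Rightarrow> complex))"
    unfolding trig_block_add[abs_def]
    by (rule torus_Lp_norm_add_le[OF assms continuous_on_trig_block continuous_on_trig_block])
  then have "2 powr (real m * w) * torus_Lp_norm p (trig_block m (\<lambda>\<xi>. c \<xi> + d \<xi>) :: real^'n \<Rightarrow> complex)
          \<le> 2 powr (real m * w) * (4 * (torus_Lp_norm p (trig_block m c :: real^'n \<Rightarrow> complex)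
                 + torus_Lp_norm p (trig_block m d :: real^'n \<Rightarrow> complex)))"
    by (rule mult_left_mono) simp
  then show ?thesis unfolding besov_block_norm_def by (simp add: algebra_simps)
qed

lemma besov_space_add:
  assumes p: "1 < p" and c: "c \<in> besov_space w p 2" and d: "d \<in> besov_space w p 2"
  shows "(\<lambda>\<xi>. c \<xi> + d \<xi>) \<in> besov_space w p 2"
  unfolding mem_besov_space_2_iff
proof (rule summable_comparison_test)
  let ?b = "besov_block_norm w p"
  show "summable (\<lambda>m. 32 * ((?b c m)^2 + (?b d m)^2))"
    using c d by (intro summable_mult summable_add) (auto simp: mem_besov_space_2_iff)
  have "(?b (\<lambda>\<xi>. c \<xi> + d \<xi>) m)^2 \<le> 32 * ((?b c m)^2 + (?b d m)^2)" for m
  proof -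
    have "(?b (\<lambda>\<xi>. c \<xi> + d \<xi>) m)^2 \<le> (4 * (?b c m + ?b d m))^2"
      using besov_block_norm_add_le[OF p] besov_block_norm_nonneg by (intro power_mono) auto
    also have "\<dots> = 32 * ((?b c m)^2 + (?b d m)^2) - 16 * (?b c m - ?b d m)^2"
      by (simp add: power2_eq_square algebra_simps)
    finally show ?thesis using zero_le_power2[of "?b c m - ?b d m"] by linarith
  qed
  then show "\<exists>N. \<forall>m\<ge>N. norm ((?b (\<lambda>\<xi>. c \<xi> + d \<xi>) m)^2) \<le> 32 * ((?b c m)^2 + (?b d m)^2)"
    by simp
qed

lemma besov_block_norm_eq_0:
  "0 < p \<Longrightarrow> (\<And>\<xi>. \<xi> \<in> dyadic_block m \<Longrightarrow> c \<xi> = 0) \<Longrightarrow> besov_block_norm w p c m = 0"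
  unfolding besov_block_norm_def by (simp add: trig_block_eq_0 torus_Lp_norm_zero)

lemma zero_in_besov_space: "0 < p \<Longrightarrow> (\<lambda>\<xi>. 0) \<in> besov_space w p 2"
  unfolding mem_besov_space_2_iff by (simp add: besov_block_norm_eq_0)

lemma besov_norm_zero: "0 < p \<Longrightarrow> besov_norm w p 2 (\<lambda>\<xi>. 0) = 0"
  using besov_norm_2_eq[OF zero_in_besov_space] by (simp add: besov_block_norm_eq_0)

lemma besov_space_diff:
  "1 < p \<Longrightarrow> c \<in> besov_space w p 2 \<Longrightarrow> d \<in> besov_space w p 2 \<Longrightarrow> (\<lambda>\<xi>. c \<xi> - d \<xi>) \<in> besov_space w p 2"
  using besov_space_add[of p c w "\<lambda>\<xi>. (-1) * d \<xi>"] besov_space_scale[of p d w "-1"] by simp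

lemma besov_space_sum:
  assumes p: "1 < p" and "finite F" and "\<And>i. i \<in> F \<Longrightarrow> f i \<in> besov_space w p 2"
  shows "(\<lambda>\<xi>. \<Sum>i\<in>F. f i \<xi>) \<in> besov_space w p 2"
  using assms(2,3)
proof (induction F rule: finite_induct)
  case empty
  then show ?case using zero_in_besov_space[of p w] p by simp
next
  case (insert x F)
  then show ?case using besov_space_add[OF p, of "f x" w "\<lambda>\<xi>. \<Sum>i\<in>F. f i \<xi>"] by simp
qed

section \<open>Truncation to finitely many blocks\<close>

definition block_trunc :: "nat \<Rightarrow> (int^'n \<Rightarrow> complex) \<Rightarrow> int^'n \<Rightarrow> complex" where
  "block_trunc M c = (\<lambda>\<xi>. if block_index \<xi> < M then c \<xi> else 0)"

definition block_tail :: "nat \<Rightarrow> (int^'n \<Rightarrow> complex) \<Rightarrow> int^'n \<Rightarrow> complex" where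
  "block_tail M c = (\<lambda>\<xi>. if block_index \<xi> < M then 0 else c \<xi>)"

lemma block_trunc_add_block_tail: "(\<lambda>\<xi>. block_trunc M c \<xi> + block_tail M c \<xi>) = c"
  by (auto simp: block_trunc_def block_tail_def)

lemma trig_block_block_trunc:
  "trig_block m (block_trunc M c) = (if m < M then trig_block m c else (\<lambda>x. 0))"
  unfolding trig_block_def block_trunc_def by (auto intro!: ext sum.cong sum.neutral simp: block_index_eq)

lemma trig_block_block_tail:
  "trig_block m (block_tail M c) = (if m < M then (\<lambda>x. 0) else trig_block m c)"
  unfolding trig_block_def block_tail_def by (auto intro!: ext sum.cong sum.neutral simp: block_index_eq)

lemma besov_block_norm_block_trunc:
  "0 < p \<Longrightarrow> besov_block_norm w p (block_trunc M c) m = (if m < M then besov_block_norm w p c m else 0)"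
  unfolding besov_block_norm_def trig_block_block_trunc by (simp add: torus_Lp_norm_zero)

lemma besov_block_norm_block_tail:
  "0 < p \<Longrightarrow> besov_block_norm w p (block_tail M c) m = (if m < M then 0 else besov_block_norm w p c m)"
  unfolding besov_block_norm_def trig_block_block_tail by (simp add: torus_Lp_norm_zero)

lemma block_trunc_in_besov_space:
  assumes p: "0 < p" and c: "c \<in> besov_space w p 2"
  shows "block_trunc M c \<in> besov_space w p 2"
    and "besov_norm w p 2 (block_trunc M c) \<le> besov_norm w p 2 c"
proof -
  show t: "block_trunc M c \<in> besov_space w p 2"
    unfolding mem_besov_space_2_iff besov_block_norm_block_trunc[OF p]
    by (rule summable_finite[of "{..<M}"]) auto
  have "(\<Sum>m. (besov_block_norm w p (block_trunc M c) m)^2) \<le> (\<Sum>m. (besov_block_norm w p c m)^2)"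
    by (rule suminf_le)
       (use t c in \<open>auto simp: besov_block_norm_block_trunc[OF p] mem_besov_space_2_iff\<close>)
  then show "besov_norm w p 2 (block_trunc M c) \<le> besov_norm w p 2 c"
    using besov_norm_2_eq[OF t] besov_norm_2_eq[OF c] by simp
qed

lemma block_tail_in_besov_space:
  assumes p: "0 < p" and c: "c \<in> besov_space w p 2"
  shows "block_tail M c \<in> besov_space w p 2"
    and "(\<lambda>M. besov_norm w p 2 (block_tail M c)) \<longlonglongrightarrow> 0"
proof -
  define b where "b = (\<lambda>m. (besov_block_norm w p c m)^2)"
  have b: "summable b" using c by (simp add: mem_besov_space_2_iff b_def)
  have "(\<lambda>m. (besov_block_norm w p (block_tail M c) m)^2) = (\<lambda>m. b m - (if m \<in> {..<M} then b m else 0))"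
    for M by (auto simp: besov_block_norm_block_tail[OF p] b_def)
  then have sums: "(\<lambda>m. (besov_block_norm w p (block_tail M c) m)^2) sums (suminf b - (\<Sum>m<M. b m))" for M
    by (simp only:) (intro sums_diff summable_sums b sums_If_finite_set, simp)
  then show t: "block_tail M c \<in> besov_space w p 2" for M
    unfolding mem_besov_space_2_iff by (auto simp: sums_iff)
  have "besov_norm w p 2 (block_tail M c) = sqrt (suminf b - (\<Sum>m<M. b m))" for M
    using besov_norm_2_eq[OF t] sums[of M] by (simp add: sums_iff)
  moreover have "(\<lambda>M. sqrt (suminf b - (\<Sum>m<M. b m))) \<longlonglongrightarrow> sqrt (suminf b - suminf b)"
    by (intro tendsto_intros summable_LIMSEQ b)
  ultimately show "(\<lambda>M. besov_norm w p 2 (block_tail M c)) \<longlonglongrightarrow> 0" by simp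
qed

lemma finite_support_in_besov_space:
  assumes p: "0 < p" and S: "finite S" and c: "\<And>\<xi>. \<xi> \<notin> S \<Longrightarrow> c \<xi> = 0"
  shows "c \<in> besov_space w p 2"
proof -
  define M where "M = Suc (Max (insert 0 (block_index ` S)))"
  have "block_index \<xi> < M" if "\<xi> \<in> S" for \<xi>
    using that S unfolding M_def by (simp add: le_imp_less_Suc)
  then have "besov_block_norm w p c m = 0" if "m \<notin> {..<M}" for m
    using that by (intro besov_block_norm_eq_0[OF p]) (metis block_index_eq c lessThan_iff)
  then show ?thesis
    unfolding mem_besov_space_2_iff by (intro summable_finite[of "{..<M}"]) auto
qed

definition delta :: "int^'n \<Rightarrow> int^'n \<Rightarrow> complex" where
  "delta \<eta> = (\<lambda>\<xi>. if \<xi> = \<eta> then 1 else 0)"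

lemma delta_in_besov_space: "0 < p \<Longrightarrow> delta \<eta> \<in> besov_space w p 2"
  by (rule finite_support_in_besov_space[of p "{\<eta>}"]) (auto simp: delta_def)

lemma besov_norm_delta_le:
  fixes \<eta> :: "int^'n"
  assumes p: "0 < p"
  shows "besov_norm w p 2 (delta \<eta>) \<le> 2 powr (real (block_index \<eta>) * w)"
proof -
  define t where "t m = (if m = block_index \<eta> then 2 powr (real (block_index \<eta>) * w) else 0)" for m
  have t: "t sums 2 powr (real (block_index \<eta>) * w)" unfolding t_def by (rule sums_single)
  have "besov_block_norm w p (delta \<eta>) m \<le> t m" for m
  proof (cases "m = block_index \<eta>")
    case True
    have "torus_Lp_norm p (trig_block m (delta \<eta>) :: real^'n \<Rightarrow> complex)
            \<le> (\<Sum>\<xi>\<in>dyadic_block m. norm (delta \<eta> \<xi>))"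
      by (rule torus_Lp_norm_trig_block_le[OF p])
    also have "\<dots> = (\<Sum>\<xi>\<in>dyadic_block m. if \<xi> = \<eta> then 1 else 0)"
      by (intro sum.cong) (auto simp: delta_def)
    also have "\<dots> = 1" using True mem_dyadic_block_index[of \<eta>] by simp
    finally show ?thesis using True unfolding besov_block_norm_def t_def by (simp add: mult_left_le)
  next
    case False
    then have "besov_block_norm w p (delta \<eta>) m = 0"
      by (intro besov_block_norm_eq_0[OF p]) (auto simp: delta_def block_index_eq)
    then show ?thesis using False by (simp add: t_def)
  qed
  from besov_norm_le_suminf(2)[OF this _ sums_summable[OF t]] t show ?thesis
    by (auto simp: sums_iff t_def)
qed

text \<open>Each block of \<open>d\<close> is controlled by the \<open>\<ell>\<^sup>1\<close> norm of its coefficients,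
  and each coefficient of \<open>c\<close> by the Besov norm of \<open>c\<close>.\<close>

lemma besov_norm_le_weighted:
  assumes p: "1 < p" and c: "c \<in> besov_space w p 2" and g0: "\<And>\<xi>. 0 \<le> g \<xi>"
    and g: "g summable_on UNIV" and d: "\<And>\<xi>. norm (d \<xi>) \<le> g \<xi> * norm (c \<xi>)"
  shows "d \<in> besov_space w p 2" and "besov_norm w p 2 d \<le> besov_norm w p 2 c * infsum g UNIV"
proof -
  define t where "t m = besov_norm w p 2 c * (\<Sum>\<xi>\<in>dyadic_block m. g \<xi>)" for m
  have t: "t sums (besov_norm w p 2 c * infsum g UNIV)"
    unfolding t_def using sums_mult[OF sums_dyadic_blocks[OF g]] by simp
  have le: "besov_block_norm w p d m \<le> t m" for m
  proof -
    have "besov_block_norm w p d m \<le> 2 powr (real m * w) * (\<Sum>\<xi>\<in>dyadic_block m. norm (d \<xi>))"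
      unfolding besov_block_norm_def using p by (intro mult_left_mono torus_Lp_norm_trig_block_le) auto
    also have "\<dots> \<le> 2 powr (real m * w) * (\<Sum>\<xi>\<in>dyadic_block m. g \<xi> * norm (c \<xi>))"
      by (intro mult_left_mono sum_mono d) auto
    also have "\<dots> = (\<Sum>\<xi>\<in>dyadic_block m. g \<xi> * (norm (c \<xi>) * 2 powr (real (block_index \<xi>) * w)))"
      by (auto simp: sum_distrib_left block_index_eq intro!: sum.cong)
    also have "\<dots> \<le> (\<Sum>\<xi>\<in>dyadic_block m. g \<xi> * besov_norm w p 2 c)"
      by (intro sum_mono mult_left_mono coeff_weight_le_besov_norm[OF p c] g0)
    also have "\<dots> = t m" unfolding t_def by (simp add: sum_distrib_right mult.commute)
    finally show ?thesis .
  qed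
  have t0: "0 \<le> t m" for m
    unfolding t_def by (intro mult_nonneg_nonneg besov_norm_nonneg sum_nonneg g0)
  from besov_norm_le_suminf[OF le t0 sums_summable[OF t]] t
  show "d \<in> besov_space w p 2" "besov_norm w p 2 d \<le> besov_norm w p 2 c * infsum g UNIV"
    by (auto simp: sums_iff)
qed

section \<open>Continuous linear functionals\<close>

lemma besov_dual_add:
  "besov_dual w p q l \<Longrightarrow> c \<in> besov_space w p q \<Longrightarrow> d \<in> besov_space w p q
     \<Longrightarrow> l (\<lambda>\<xi>. c \<xi> + d \<xi>) = l c + l d"
  unfolding besov_dual_def by blast

lemma besov_dual_scale:
  "besov_dual w p q l \<Longrightarrow> c \<in> besov_space w p q \<Longrightarrow> l (\<lambda>\<xi>. s * c \<xi>) = s * l c"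
  unfolding besov_dual_def by blast

lemma besov_dual_sum:
  assumes p: "1 < p" and l: "besov_dual w p 2 l" and "finite F"
    and "\<And>i. i \<in> F \<Longrightarrow> f i \<in> besov_space w p 2"
  shows "l (\<lambda>\<xi>. \<Sum>i\<in>F. f i \<xi>) = (\<Sum>i\<in>F. l (f i))"
  using assms(3,4)
proof (induction F rule: finite_induct)
  case empty
  have "l (\<lambda>\<xi>. 0 * 0) = 0 * l (\<lambda>\<xi>. 0)"
    by (rule besov_dual_scale[OF l zero_in_besov_space]) (use p in simp)
  then show ?case by simp
next
  case (insert x F)
  then have "l (\<lambda>\<xi>. f x \<xi> + (\<Sum>i\<in>F. f i \<xi>)) = l (f x) + l (\<lambda>\<xi>. \<Sum>i\<in>F. f i \<xi>)"
    by (intro besov_dual_add[OF l] besov_space_sum[OF p]) auto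
  with insert show ?case by simp
qed

lemma dual_norm_set_bdd_above:
  fixes l :: "(int^'n \<Rightarrow> complex) \<Rightarrow> complex"
  assumes "besov_dual w p 2 l"
  shows "bdd_above {norm (l c) | c. c \<in> besov_space w p 2 \<and> besov_norm w p 2 c \<le> 1}"
proof -
  obtain K where K: "\<And>c. c \<in> besov_space w p 2 \<Longrightarrow> norm (l c) \<le> K * besov_norm w p 2 c"
    using assms unfolding besov_dual_def by blast
  show ?thesis
  proof (rule bdd_aboveI, safe)
    fix c :: "int^'n \<Rightarrow> complex"
    assume c: "c \<in> besov_space w p 2" "besov_norm w p 2 c \<le> 1"
    have "K * besov_norm w p 2 c \<le> \<bar>K\<bar> * besov_norm w p 2 c"
      by (intro mult_right_mono besov_norm_nonneg) simp
    also have "\<dots> \<le> \<bar>K\<bar>" using c(2) besov_norm_nonneg by (intro mult_left_le) auto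
    finally show "norm (l c) \<le> \<bar>K\<bar>" using K[OF c(1)] by linarith
  qed
qed

lemma norm_zero_mem_dual_norm_set:
  "0 < p \<Longrightarrow> norm (l (\<lambda>\<xi>. 0)) \<in> {norm (l c) | c. c \<in> besov_space w p 2 \<and> besov_norm w p 2 c \<le> 1}"
  by (rule CollectI, rule exI[of _ "\<lambda>\<xi>. 0"]) (simp add: zero_in_besov_space besov_norm_zero)

lemma dual_norm_nonneg:
  assumes "0 < p" and "besov_dual w p 2 l"
  shows "0 \<le> dual_norm w p 2 l"
proof -
  have "norm (l (\<lambda>\<xi>. 0)) \<le> dual_norm w p 2 l"
    unfolding dual_norm_def
    by (rule cSup_upper[OF norm_zero_mem_dual_norm_set[OF assms(1)] dual_norm_set_bdd_above[OF assms(2)]])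
  then show ?thesis using norm_ge_zero[of "l (\<lambda>\<xi>. 0)"] by linarith
qed

lemma dual_norm_le:
  assumes "0 < p" and "\<And>c. c \<in> besov_space w p 2 \<Longrightarrow> besov_norm w p 2 c \<le> 1 \<Longrightarrow> norm (l c) \<le> B"
  shows "dual_norm w p 2 l \<le> B"
  unfolding dual_norm_def
proof (rule cSup_least)
  show "{norm (l c) |c. c \<in> besov_space w p 2 \<and> besov_norm w p 2 c \<le> 1} \<noteq> {}"
    using norm_zero_mem_dual_norm_set[OF assms(1)] by blast
qed (use assms(2) in auto)

text \<open>Normalise \<open>c\<close> to the unit sphere and use homogeneity of \<open>l\<close>.\<close>

lemma norm_le_dual_norm:
  assumes p: "0 < p" and l: "besov_dual w p 2 l" and c: "c \<in> besov_space w p 2"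
  shows "norm (l c) \<le> dual_norm w p 2 l * besov_norm w p 2 c"
proof (cases "besov_norm w p 2 c = 0")
  case True
  obtain K where "\<And>c. c \<in> besov_space w p 2 \<Longrightarrow> norm (l c) \<le> K * besov_norm w p 2 c"
    using l unfolding besov_dual_def by blast
  from this[OF c] True show ?thesis by simp
next
  case False
  define N where "N = besov_norm w p 2 c"
  have N: "0 < N" using False besov_norm_nonneg[of w p 2 c] unfolding N_def by simp
  define c' where "c' = (\<lambda>\<xi>. (1/N) * c \<xi>)"
  have c': "c' \<in> besov_space w p 2" unfolding c'_def by (rule besov_space_scale[OF p c])
  have "besov_norm w p 2 c' = 1"
    unfolding c'_def using besov_norm_scale[OF p c, of "1/N"] N by (simp add: N_def norm_divide)
  then have "norm (l c') \<le> dual_norm w p 2 l"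
    unfolding dual_norm_def using c' by (intro cSup_upper dual_norm_set_bdd_above[OF l]) auto
  moreover have "l c' = (1/N) * l c" unfolding c'_def by (rule besov_dual_scale[OF l c])
  ultimately show ?thesis using N by (simp add: N_def norm_divide field_simps)
qed

lemma besov_dual_block_trunc_tendsto:
  assumes p: "0 < p" and l: "besov_dual w p 2 l" and c: "c \<in> besov_space w p 2"
  shows "(\<lambda>M. l (block_trunc M c)) \<longlonglongrightarrow> l c"
proof -
  have split: "l c = l (block_trunc M c) + l (block_tail M c)" for M
    using besov_dual_add[OF l block_trunc_in_besov_space(1)[OF p c, of M] block_tail_in_besov_space(1)[OF p c, of M]]
    by (simp add: block_trunc_add_block_tail)
  have "(\<lambda>M. l (block_tail M c)) \<longlonglongrightarrow> 0"
  proof (rule Lim_null_comparison)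
    show "\<forall>\<^sub>F M in sequentially. norm (l (block_tail M c)) \<le> dual_norm w p 2 l * besov_norm w p 2 (block_tail M c)"
      by (intro always_eventually allI norm_le_dual_norm[OF p l] block_tail_in_besov_space(1)[OF p c])
    show "(\<lambda>M. dual_norm w p 2 l * besov_norm w p 2 (block_tail M c)) \<longlonglongrightarrow> 0"
      using tendsto_mult_right_zero[OF block_tail_in_besov_space(2)[OF p c]] by simp
  qed
  then have "(\<lambda>M. l c - l (block_tail M c)) \<longlonglongrightarrow> l c - 0" by (intro tendsto_diff tendsto_const)
  moreover have "l c - l (block_tail M c) = l (block_trunc M c)" for M using split[of M] by simp
  ultimately show ?thesis by simp
qed

section \<open>A nuclear representation of the multiplier\<close>

lemma infinite_UNIV_int_vec: "infinite (UNIV :: (int^'n) set)"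
proof
  assume "finite (UNIV :: (int^'n) set)"
  then have "finite (range (vec :: int \<Rightarrow> int^'n))" by (rule finite_subset[rotated]) auto
  moreover have "inj (vec :: int \<Rightarrow> int^'n)" by (auto simp: inj_def vec_eq_iff)
  ultimately show False using finite_imageD by fastforce
qed

definition freq_enum :: "nat \<Rightarrow> int^'n" where
  "freq_enum = from_nat_into UNIV"

lemma bij_freq_enum: "bij (freq_enum :: nat \<Rightarrow> int^'n)"
  unfolding freq_enum_def by (rule bij_betw_from_nat_into[OF countableI_type infinite_UNIV_int_vec])

lemma sums_freq_enum:
  fixes g :: "int^'n \<Rightarrow> real"
  assumes "g summable_on UNIV"
  shows "(\<lambda>k. g (freq_enum k)) sums infsum g UNIV"
proof -
  have "(g has_sum infsum g UNIV) UNIV" using assms by simp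
  then have "((\<lambda>k. g (freq_enum k)) has_sum infsum g UNIV) UNIV"
    using has_sum_reindex_bij_betw[OF bij_freq_enum] by blast
  then show ?thesis by (rule has_sum_imp_sums)
qed

lemma sum_freq_enum_delta:
  "(\<Sum>k<N. f (freq_enum k) * delta (freq_enum k) \<xi>) = (if \<xi> \<in> freq_enum ` {..<N} then f \<xi> else 0)"
proof (cases "\<xi> \<in> freq_enum ` {..<N}")
  case True
  then obtain k0 where k0: "k0 < N" "\<xi> = freq_enum k0" by auto
  have "(\<Sum>k<N. f (freq_enum k) * delta (freq_enum k) \<xi>) = (\<Sum>k<N. if k = k0 then f \<xi> else 0)"
    using bij_freq_enum k0 by (intro sum.cong refl) (auto simp: delta_def bij_def inj_def)
  then show ?thesis using k0 True by simp
next
  case False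
  then show ?thesis by (auto intro!: sum.neutral simp: delta_def)
qed

lemma coeff_functional_besov_dual:
  assumes "1 < p"
  shows "besov_dual w p 2 (\<lambda>c. s * c \<eta>)"
  unfolding besov_dual_def
proof (intro conjI ballI allI)
  have "norm (s * c \<eta>) \<le> (norm s * 2 powr (- (real (block_index \<eta>) * w))) * besov_norm w p 2 c"
    if "c \<in> besov_space w p 2" for c
    using mult_left_mono[OF norm_coeff_le_besov_norm[OF assms that, of \<eta>] norm_ge_zero[of s]]
    by (simp add: norm_mult mult.assoc)
  then show "\<exists>K. \<forall>c\<in>besov_space w p 2. norm (s * c \<eta>) \<le> K * besov_norm w p 2 c" by blast
qed (auto simp: algebra_simps)

lemma dual_norm_coeff_functional_le:
  fixes \<eta> :: "int^'n"
  assumes "1 < p"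
  shows "dual_norm w p 2 (\<lambda>c. s * c \<eta>) \<le> norm s * 2 powr (- (real (block_index \<eta>) * w))"
proof (rule dual_norm_le)
  fix c :: "int^'n \<Rightarrow> complex" assume c: "c \<in> besov_space w p 2" "besov_norm w p 2 c \<le> 1"
  have "norm (s * c \<eta>) \<le> norm s * (2 powr (- (real (block_index \<eta>) * w)) * besov_norm w p 2 c)"
    unfolding norm_mult by (intro mult_left_mono norm_coeff_le_besov_norm[OF assms c(1)]) simp
  also have "\<dots> \<le> norm s * (2 powr (- (real (block_index \<eta>) * w)) * 1)"
    using c(2) by (intro mult_left_mono) auto
  finally show "norm (s * c \<eta>) \<le> norm s * 2 powr (- (real (block_index \<eta>) * w))" by simp
qed (use assms in simp)

lemma norm_dual_norm_coeff_functional_mult_besov_norm_delta_le: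
  fixes \<eta> :: "int^'n"
  assumes "1 < p"
  shows "norm (dual_norm w p 2 (\<lambda>c. s * c \<eta>) * besov_norm w p 2 (delta \<eta>)) \<le> norm s"
proof -
  have d0: "0 \<le> dual_norm w p 2 (\<lambda>c. s * c \<eta>)"
    using assms by (intro dual_norm_nonneg coeff_functional_besov_dual) auto
  have "besov_norm w p 2 (delta \<eta>) \<le> 2 powr (real (block_index \<eta>) * w)"
    by (rule besov_norm_delta_le) (use assms in simp)
  then have "dual_norm w p 2 (\<lambda>c. s * c \<eta>) * besov_norm w p 2 (delta \<eta>)
          \<le> (norm s * 2 powr (- (real (block_index \<eta>) * w))) * 2 powr (real (block_index \<eta>) * w)"
    by (rule mult_mono[OF dual_norm_coeff_functional_le[OF assms] _ _ besov_norm_nonneg]) simp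
  also have "\<dots> = norm s" by (simp add: powr_minus field_simps)
  finally show ?thesis using d0 by (simp add: abs_mult besov_norm_nonneg abs_of_nonneg)
qed

lemma fourier_mult_in_besov_space:
  assumes "1 < p" and "c \<in> besov_space w p 2" and "(\<lambda>\<xi>. norm (a \<xi>)) summable_on UNIV"
  shows "fourier_mult a c \<in> besov_space w p 2"
  by (rule besov_norm_le_weighted(1)[OF assms(1,2) _ assms(3)]) (auto simp: fourier_mult_def norm_mult)

lemma besov_norm_fourier_mult_outside_le:
  fixes a :: "int^'n \<Rightarrow> complex"
  assumes p: "1 < p" and c: "c \<in> besov_space w p 2" and a: "(\<lambda>\<xi>. norm (a \<xi>)) summable_on UNIV"
    and F: "finite F"
  shows "besov_norm w p 2 (\<lambda>\<xi>. if \<xi> \<in> F then 0 else a \<xi> * c \<xi>)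
           \<le> besov_norm w p 2 c * ((\<Sum>\<^sub>\<infinity>\<xi>. norm (a \<xi>)) - (\<Sum>\<xi>\<in>F. norm (a \<xi>)))"
proof -
  define g where "g \<xi> = (if \<xi> \<in> F then 0 else norm (a \<xi>))" for \<xi>
  have a_off: "(\<lambda>\<xi>. norm (a \<xi>)) summable_on (UNIV - F)"
    by (rule summable_on_subset_banach[OF a]) auto
  then have g: "g summable_on UNIV"
    by (subst summable_on_cong_neutral[where T="UNIV - F" and g="\<lambda>\<xi>. norm (a \<xi>)"]) (auto simp: g_def)
  have "infsum g UNIV = (\<Sum>\<^sub>\<infinity>\<xi>\<in>UNIV - F. norm (a \<xi>))"
    by (rule infsum_cong_neutral) (auto simp: g_def)
  also have "\<dots> = (\<Sum>\<^sub>\<infinity>\<xi>. norm (a \<xi>)) - (\<Sum>\<xi>\<in>F. norm (a \<xi>))"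
    using infsum_Un_disjoint[OF summable_on_finite[OF F] a_off] F by simp
  finally have "infsum g UNIV = (\<Sum>\<^sub>\<infinity>\<xi>. norm (a \<xi>)) - (\<Sum>\<xi>\<in>F. norm (a \<xi>))" .
  moreover have "besov_norm w p 2 (\<lambda>\<xi>. if \<xi> \<in> F then 0 else a \<xi> * c \<xi>) \<le> besov_norm w p 2 c * infsum g UNIV"
    by (rule besov_norm_le_weighted(2)[OF p c _ g]) (auto simp: g_def norm_mult)
  ultimately show ?thesis by simp
qed

text \<open>The partial sums of the representation below are \<open>T\<^sub>a c\<close> restricted to finitely
  many frequencies, so their distance to \<open>T\<^sub>a c\<close> is controlled by a tail of \<open>\<Sum>|a|\<close>.\<close>

lemma fourier_mult_partial_sums_tendsto:
  fixes a :: "int^'n \<Rightarrow> complex"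
  assumes p: "1 < p" and c: "c \<in> besov_space w p 2" and a: "(\<lambda>\<xi>. norm (a \<xi>)) summable_on UNIV"
  shows "(\<lambda>N. besov_norm w p 2 (\<lambda>\<xi>. fourier_mult a c \<xi>
            - (\<Sum>k<N. a (freq_enum k) * c (freq_enum k) * delta (freq_enum k) \<xi>))) \<longlonglongrightarrow> 0"
proof -
  define F where "F N = (freq_enum ` {..<N} :: (int^'n) set)" for N
  have diff: "(\<lambda>\<xi>. fourier_mult a c \<xi> - (\<Sum>k<N. a (freq_enum k) * c (freq_enum k) * delta (freq_enum k) \<xi>))
                = (\<lambda>\<xi>. if \<xi> \<in> F N then 0 else a \<xi> * c \<xi>)" for N
  proof
    fix \<xi>
    show "fourier_mult a c \<xi> - (\<Sum>k<N. a (freq_enum k) * c (freq_enum k) * delta (freq_enum k) \<xi>)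
            = (if \<xi> \<in> F N then 0 else a \<xi> * c \<xi>)"
      using sum_freq_enum_delta[of "\<lambda>\<xi>. a \<xi> * c \<xi>" \<xi> N] unfolding F_def fourier_mult_def by simp
  qed
  have "(\<lambda>N. \<Sum>\<xi>\<in>F N. norm (a \<xi>)) \<longlonglongrightarrow> (\<Sum>\<^sub>\<infinity>\<xi>. norm (a \<xi>))"
  proof (rule has_sum_imp_tendsto_exhaustion[where S=UNIV])
    fix \<xi> :: "int^'n"
    obtain k where k: "\<xi> = freq_enum k" using bij_freq_enum by (metis bij_pointE)
    show "eventually (\<lambda>N. \<xi> \<in> F N) sequentially"
      by (rule eventually_mono[OF eventually_gt_at_top[of k]]) (simp add: F_def k)
  next
    show "((\<lambda>\<xi>. norm (a \<xi>)) has_sum (\<Sum>\<^sub>\<infinity>\<xi>. norm (a \<xi>))) UNIV" using a by simp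
  qed (simp_all add: F_def)
  then have "(\<lambda>N. besov_norm w p 2 c * ((\<Sum>\<^sub>\<infinity>\<xi>. norm (a \<xi>)) - (\<Sum>\<xi>\<in>F N. norm (a \<xi>))))
               \<longlonglongrightarrow> besov_norm w p 2 c * ((\<Sum>\<^sub>\<infinity>\<xi>. norm (a \<xi>)) - (\<Sum>\<^sub>\<infinity>\<xi>. norm (a \<xi>)))"
    by (intro tendsto_mult tendsto_diff tendsto_const)
  then have lim: "(\<lambda>N. besov_norm w p 2 c * ((\<Sum>\<^sub>\<infinity>\<xi>. norm (a \<xi>)) - (\<Sum>\<xi>\<in>F N. norm (a \<xi>)))) \<longlonglongrightarrow> 0"
    by simp
  have bound: "besov_norm w p 2 (\<lambda>\<xi>. if \<xi> \<in> F N then 0 else a \<xi> * c \<xi>)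
                   \<le> besov_norm w p 2 c * ((\<Sum>\<^sub>\<infinity>\<xi>. norm (a \<xi>)) - (\<Sum>\<xi>\<in>F N. norm (a \<xi>)))" for N
    by (rule besov_norm_fourier_mult_outside_le[OF p c a]) (simp add: F_def)
  show ?thesis unfolding diff
    by (rule tendsto_sandwich[OF _ _ tendsto_const lim])
       (simp_all add: always_eventually besov_norm_nonneg bound)
qed

lemma summable_nuclear_norms_fourier_mult:
  fixes a :: "int^'n \<Rightarrow> complex"
  assumes p: "1 < p" and a: "(\<lambda>\<xi>. norm (a \<xi>)) summable_on UNIV"
  shows "summable (\<lambda>k. dual_norm w p 2 (\<lambda>c::int^'n \<Rightarrow> complex. a (freq_enum k) * c (freq_enum k))
                       * besov_norm w p 2 (delta (freq_enum k :: int^'n)))"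
proof (rule summable_comparison_test'[OF sums_summable[OF sums_freq_enum[OF a]], where N=0])
  show "norm (dual_norm w p 2 (\<lambda>c::int^'n \<Rightarrow> complex. a (freq_enum k) * c (freq_enum k))
               * besov_norm w p 2 (delta (freq_enum k :: int^'n))) \<le> norm (a (freq_enum k))" for k
    by (rule norm_dual_norm_coeff_functional_mult_besov_norm_delta_le[OF p])
qed

lemma nuclear_rep_fourier_mult:
  fixes a :: "int^'n \<Rightarrow> complex"
  assumes p: "1 < p" and a: "(\<lambda>\<xi>. norm (a \<xi>)) summable_on UNIV"
  shows "nuclear_rep w p 2 (fourier_mult a)
           (\<lambda>k c. a (freq_enum k) * c (freq_enum k)) (\<lambda>k. delta (freq_enum k))"
  unfolding nuclear_rep_def
proof (intro conjI allI ballI)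
  show "besov_dual w p 2 (\<lambda>c. a (freq_enum k) * c (freq_enum k :: int^'n))" for k
    by (rule coeff_functional_besov_dual[OF p])
  show "delta (freq_enum k :: int^'n) \<in> besov_space w p 2" for k
    using p by (intro delta_in_besov_space) simp
  show "summable (\<lambda>k. dual_norm w p 2 (\<lambda>c. a (freq_enum k) * c (freq_enum k :: int^'n))
                       * besov_norm w p 2 (delta (freq_enum k :: int^'n)))"
    by (rule summable_nuclear_norms_fourier_mult[OF p a])
  fix c :: "int^'n \<Rightarrow> complex" assume c: "c \<in> besov_space w p 2"
  show "fourier_mult a c \<in> besov_space w p 2" by (rule fourier_mult_in_besov_space[OF p c a])
  show "(\<lambda>N. besov_norm w p 2 (\<lambda>\<xi>. fourier_mult a c \<xi>
           - (\<Sum>k<N. a (freq_enum k) * c (freq_enum k) * delta (freq_enum k) \<xi>))) \<longlonglongrightarrow> 0"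
    by (rule fourier_mult_partial_sums_tendsto[OF p c a])
qed

section \<open>The nuclear trace is the sum of the diagonal\<close>

lemma nuclear_rep_coeff_tendsto:
  fixes T :: "(int^'n \<Rightarrow> complex) \<Rightarrow> int^'n \<Rightarrow> complex"
  assumes p: "1 < p" and T: "nuclear_rep w p 2 T l y" and c: "c \<in> besov_space w p 2"
  shows "(\<lambda>N. \<Sum>k<N. l k c * y k \<xi>) \<longlonglongrightarrow> T c \<xi>"
proof -
  define D where "D N = (\<lambda>\<eta>. T c \<eta> - (\<Sum>k<N. l k c * y k \<eta>))" for N
  have y: "\<And>k. y k \<in> besov_space w p 2" and Tc: "T c \<in> besov_space w p 2"
    and lim: "(\<lambda>N. besov_norm w p 2 (D N)) \<longlonglongrightarrow> 0"
    using T c unfolding nuclear_rep_def D_def by auto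
  have D: "D N \<in> besov_space w p 2" for N
    unfolding D_def using p by (intro besov_space_diff besov_space_sum besov_space_scale Tc y) auto
  have "(\<lambda>N. D N \<xi>) \<longlonglongrightarrow> 0"
  proof (rule Lim_null_comparison)
    show "\<forall>\<^sub>F N in sequentially. norm (D N \<xi>) \<le> 2 powr (- (real (block_index \<xi>) * w)) * besov_norm w p 2 (D N)"
      by (intro always_eventually allI norm_coeff_le_besov_norm[OF p D])
    show "(\<lambda>N. 2 powr (- (real (block_index \<xi>) * w)) * besov_norm w p 2 (D N)) \<longlonglongrightarrow> 0"
      by (rule tendsto_mult_right_zero[OF lim])
  qed
  then have "(\<lambda>N. T c \<xi> - D N \<xi>) \<longlonglongrightarrow> T c \<xi> - 0" by (intro tendsto_diff tendsto_const)
  then show ?thesis by (simp add: D_def)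
qed

lemma norm_dual_block_trunc_le:
  assumes p: "0 < p" and l: "besov_dual w p 2 l" and y: "y \<in> besov_space w p 2"
  shows "norm (l (block_trunc M y)) \<le> dual_norm w p 2 l * besov_norm w p 2 y"
proof -
  have "norm (l (block_trunc M y)) \<le> dual_norm w p 2 l * besov_norm w p 2 (block_trunc M y)"
    by (rule norm_le_dual_norm[OF p l block_trunc_in_besov_space(1)[OF p y]])
  also have "\<dots> \<le> dual_norm w p 2 l * besov_norm w p 2 y"
    by (intro mult_left_mono block_trunc_in_besov_space(2)[OF p y] dual_norm_nonneg[OF p l])
  finally show ?thesis .
qed

lemma block_trunc_eq_sum_delta:
  fixes c :: "int^'n \<Rightarrow> complex"
  shows "block_trunc M c = (\<lambda>\<eta>. \<Sum>\<xi>\<in>dyadic_ball M. c \<xi> * delta \<xi> \<eta>)"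
proof
  fix \<eta> :: "int^'n"
  have "(\<Sum>\<xi>\<in>dyadic_ball M. c \<xi> * delta \<xi> \<eta>) = (\<Sum>\<xi>\<in>dyadic_ball M. if \<xi> = \<eta> then c \<eta> else 0)"
    by (intro sum.cong) (auto simp: delta_def)
  then show "block_trunc M c \<eta> = (\<Sum>\<xi>\<in>dyadic_ball M. c \<xi> * delta \<xi> \<eta>)"
    by (simp add: block_trunc_def mem_dyadic_ball_iff)
qed

text \<open>Compressing a nuclear representation to the frequencies of the first \<open>M\<close> blocks
  gives a finite-rank operator, whose trace can be computed in both ways.\<close>

lemma nuclear_rep_sum_diagonal_dyadic_ball:
  fixes T :: "(int^'n \<Rightarrow> complex) \<Rightarrow> int^'n \<Rightarrow> complex"
  assumes p: "1 < p" and T: "nuclear_rep w p 2 T l y"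
  shows "(\<Sum>\<xi>\<in>dyadic_ball M. T (delta \<xi>) \<xi>) = (\<Sum>k. l k (block_trunc M (y k)))"
proof -
  have p0: "0 < p" using p by simp
  have l: "\<And>k. besov_dual w p 2 (l k)" and y: "\<And>k. y k \<in> besov_space w p 2"
    and sm: "summable (\<lambda>k. dual_norm w p 2 (l k) * besov_norm w p 2 (y k))"
    using T unfolding nuclear_rep_def by auto
  have l_trunc: "l k (block_trunc M (y k)) = (\<Sum>\<xi>\<in>dyadic_ball M. l k (delta \<xi>) * y k \<xi>)" for k
  proof -
    have "l k (block_trunc M (y k)) = (\<Sum>\<xi>\<in>dyadic_ball M. l k (\<lambda>\<eta>. y k \<xi> * delta \<xi> \<eta>))"
      unfolding block_trunc_eq_sum_delta
      by (rule besov_dual_sum[OF p l]) (auto intro!: besov_space_scale[OF p0] delta_in_besov_space[OF p0])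
    also have "\<dots> = (\<Sum>\<xi>\<in>dyadic_ball M. l k (delta \<xi>) * y k \<xi>)"
      by (intro sum.cong refl) (simp add: besov_dual_scale[OF l delta_in_besov_space[OF p0]])
    finally show ?thesis .
  qed
  have "(\<lambda>N. \<Sum>\<xi>\<in>dyadic_ball M. \<Sum>k<N. l k (delta \<xi>) * y k \<xi>) \<longlonglongrightarrow> (\<Sum>\<xi>\<in>dyadic_ball M. T (delta \<xi>) \<xi>)"
    by (intro tendsto_sum nuclear_rep_coeff_tendsto[OF p T delta_in_besov_space[OF p0]])
  then have partial: "(\<lambda>N. \<Sum>k<N. l k (block_trunc M (y k))) \<longlonglongrightarrow> (\<Sum>\<xi>\<in>dyadic_ball M. T (delta \<xi>) \<xi>)"
    unfolding l_trunc by (subst sum.swap) simp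
  have "summable (\<lambda>k. norm (l k (block_trunc M (y k))))"
    by (rule summable_comparison_test'[OF sm, where N=0]) (simp add: norm_dual_block_trunc_le[OF p0 l y])
  then have "summable (\<lambda>k. l k (block_trunc M (y k)))" by (rule summable_norm_cancel)
  from LIMSEQ_unique[OF partial summable_LIMSEQ[OF this]] show ?thesis .
qed

lemma nuclear_rep_block_trunc_tendsto:
  assumes p: "1 < p" and T: "nuclear_rep w p 2 T l y"
  shows "(\<lambda>M. \<Sum>k. l k (block_trunc M (y k))) \<longlonglongrightarrow> nuclear_trace_of l y"
proof -
  have p0: "0 < p" using p by simp
  have l: "\<And>k. besov_dual w p 2 (l k)" and y: "\<And>k. y k \<in> besov_space w p 2"
    and sm: "summable (\<lambda>k. dual_norm w p 2 (l k) * besov_norm w p 2 (y k))"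
    using T unfolding nuclear_rep_def by auto
  have "eventually (\<lambda>M. summable (\<lambda>k. norm (l k (block_trunc M (y k))))) sequentially \<and>
        summable (\<lambda>k. norm (l k (y k))) \<and>
        (\<lambda>M. \<Sum>k. l k (block_trunc M (y k))) \<longlonglongrightarrow> (\<Sum>k. l k (y k))"
    by (rule tannerys_theorem[OF besov_dual_block_trunc_tendsto[OF p0 l y] _ sm])
       (simp_all add: always_eventually norm_dual_block_trunc_le[OF p0 l y] case_prod_unfold)
  then show ?thesis unfolding nuclear_trace_of_def by blast
qed

text \<open>In particular the nuclear trace does not depend on the representation.\<close>

theorem nuclear_trace_eq_infsum_diagonal:
  fixes T :: "(int^'n \<Rightarrow> complex) \<Rightarrow> int^'n \<Rightarrow> complex"
  assumes p: "1 < p" and T: "nuclear_rep w p 2 T l y"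
    and diag: "(\<lambda>\<xi>. T (delta \<xi>) \<xi>) summable_on UNIV"
  shows "nuclear_trace_of l y = (\<Sum>\<^sub>\<infinity>\<xi>. T (delta \<xi>) \<xi>)"
proof -
  have "(\<lambda>M. \<Sum>\<xi>\<in>dyadic_ball M. T (delta \<xi>) \<xi>) \<longlonglongrightarrow> (\<Sum>\<^sub>\<infinity>\<xi>. T (delta \<xi>) \<xi>)"
    by (rule has_sum_imp_tendsto_exhaustion[where S=UNIV])
       (use diag eventually_mem_dyadic_ball in auto)
  then have "(\<lambda>M. \<Sum>k. l k (block_trunc M (y k))) \<longlonglongrightarrow> (\<Sum>\<^sub>\<infinity>\<xi>. T (delta \<xi>) \<xi>)"
    by (simp only: nuclear_rep_sum_diagonal_dyadic_ball[OF p T])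
  from LIMSEQ_unique[OF nuclear_rep_block_trunc_tendsto[OF p T] this] show ?thesis .
qed

section \<open>Eigenvalues of the multiplier\<close>

lemma sum_fun_apply: "(\<Sum>v\<in>B. f v) x = (\<Sum>v\<in>B. f v x :: 'b::comm_monoid_add)"
  by (induction B rule: infinite_finite_induct) auto

interpretation pointwise: vector_space "\<lambda>(s::complex) (f::'a \<Rightarrow> complex) \<xi>. s * f \<xi>"
  by unfold_locales (auto simp: fun_eq_iff algebra_simps)

lemma span_delta:
  assumes "finite F"
  shows "pointwise.span (delta ` F) = {c::int^'n \<Rightarrow> complex. \<forall>\<xi>. \<xi> \<notin> F \<longrightarrow> c \<xi> = 0}"
proof (rule pointwise.span_subspace)
  show "delta ` F \<subseteq> {c. \<forall>\<xi>. \<xi> \<notin> F \<longrightarrow> c \<xi> = 0}" by (auto simp: delta_def)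
  show "pointwise.subspace {c::int^'n \<Rightarrow> complex. \<forall>\<xi>. \<xi> \<notin> F \<longrightarrow> c \<xi> = 0}"
    unfolding pointwise.subspace_def by auto
  show "{c. \<forall>\<xi>. \<xi> \<notin> F \<longrightarrow> c \<xi> = 0} \<subseteq> pointwise.span (delta ` F)"
  proof safe
    fix c :: "int^'n \<Rightarrow> complex" assume c: "\<forall>\<xi>. \<xi> \<notin> F \<longrightarrow> c \<xi> = 0"
    have "c = (\<Sum>\<xi>\<in>F. (\<lambda>\<eta>. c \<xi> * delta \<xi> \<eta>))"
    proof
      fix \<eta>
      have "(\<Sum>\<xi>\<in>F. (\<lambda>\<eta>. c \<xi> * delta \<xi> \<eta>)) \<eta> = (\<Sum>\<xi>\<in>F. if \<xi> = \<eta> then c \<eta> else 0)"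
        unfolding sum_fun_apply by (intro sum.cong) (auto simp: delta_def)
      then show "c \<eta> = (\<Sum>\<xi>\<in>F. (\<lambda>\<eta>. c \<xi> * delta \<xi> \<eta>)) \<eta>" using c assms by auto
    qed
    also have "\<dots> \<in> pointwise.span (delta ` F)"
      by (intro pointwise.span_sum pointwise.span_scale pointwise.span_base) auto
    finally show "c \<in> pointwise.span (delta ` F)" .
  qed
qed

lemma independent_delta:
  assumes "finite (F :: (int^'n) set)"
  shows "\<not> pointwise.dependent (delta ` F)"
proof
  assume "pointwise.dependent (delta ` F)"
  then obtain u v0 where v0: "v0 \<in> delta ` F" "u v0 \<noteq> 0"
    and zero: "(\<Sum>v\<in>delta ` F. (\<lambda>\<xi>. u v * v \<xi>)) = 0"
    unfolding pointwise.dependent_finite[OF finite_imageI[OF assms]] by blast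
  obtain \<xi>0 where \<xi>0: "\<xi>0 \<in> F" "v0 = delta \<xi>0" using v0(1) by blast
  have "0 = (\<Sum>v\<in>delta ` F. u v * v \<xi>0)" using fun_cong[OF zero, of \<xi>0] by (simp add: sum_fun_apply)
  also have "\<dots> = (\<Sum>v\<in>delta ` F. if v = v0 then u v0 else 0)"
  proof (intro sum.cong refl)
    fix v assume "v \<in> delta ` F"
    then obtain \<xi> where v: "v = delta \<xi>" by blast
    show "u v * v \<xi>0 = (if v = v0 then u v0 else 0)"
    proof (cases "\<xi> = \<xi>0")
      case False
      then have "v \<xi>0 = 0" "v0 \<xi>0 = 1" using \<xi>0 by (auto simp: v delta_def)
      then show ?thesis by auto
    qed (use \<xi>0 in \<open>simp add: v delta_def\<close>)
  qed
  also have "\<dots> = u v0" using v0 assms by simp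
  finally show False using v0 by simp
qed

lemma dim_functions_supported_on:
  assumes "finite (F :: (int^'n) set)"
  shows "pointwise.dim {c::int^'n \<Rightarrow> complex. \<forall>\<xi>. \<xi> \<notin> F \<longrightarrow> c \<xi> = 0} = card F"
proof -
  have "inj_on delta F" by (auto simp: inj_on_def delta_def fun_eq_iff)
  then show ?thesis
    using pointwise.dim_span_eq_card_independent[OF independent_delta[OF assms]]
    by (simp add: span_delta[OF assms] card_image)
qed

lemma fourier_mult_shift_funpow:
  "((\<lambda>d. (\<lambda>\<xi>. fourier_mult a d \<xi> - \<mu> * d \<xi>)) ^^ k) c = (\<lambda>\<xi>. (a \<xi> - \<mu>)^k * c \<xi>)"
  by (induction k) (auto simp: fourier_mult_def algebra_simps)

lemma gen_eigenspace_fourier_mult: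
  fixes a :: "int^'n \<Rightarrow> complex"
  assumes p: "0 < p" and fin: "finite {\<xi>. a \<xi> = \<mu>}"
  shows "gen_eigenspace w p 2 (fourier_mult a) \<mu> = {c. \<forall>\<xi>. a \<xi> \<noteq> \<mu> \<longrightarrow> c \<xi> = 0}"
proof safe
  fix c \<xi> assume "c \<in> gen_eigenspace w p 2 (fourier_mult a) \<mu>" and ne: "a \<xi> \<noteq> \<mu>"
  then obtain k where "(\<lambda>\<xi>. (a \<xi> - \<mu>)^k * c \<xi>) = 0"
    unfolding gen_eigenspace_def fourier_mult_shift_funpow by blast
  then have "(a \<xi> - \<mu>)^k * c \<xi> = 0" by (metis zero_fun_apply)
  then show "c \<xi> = 0" using ne by simp
next
  fix c :: "int^'n \<Rightarrow> complex" assume c: "\<forall>\<xi>. a \<xi> \<noteq> \<mu> \<longrightarrow> c \<xi> = 0"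
  have "c \<in> besov_space w p 2" by (rule finite_support_in_besov_space[OF p fin]) (use c in auto)
  moreover have "((\<lambda>d. (\<lambda>\<xi>. fourier_mult a d \<xi> - \<mu> * d \<xi>)) ^^ 1) c = 0"
    unfolding fourier_mult_shift_funpow using c by (auto simp: fun_eq_iff)
  ultimately show "c \<in> gen_eigenspace w p 2 (fourier_mult a) \<mu>" unfolding gen_eigenspace_def by blast
qed

lemma alg_mult_fourier_mult:
  fixes a :: "int^'n \<Rightarrow> complex"
  assumes "0 < p" and "finite {\<xi>. a \<xi> = \<mu>}"
  shows "alg_mult w p 2 (fourier_mult a) \<mu> = card {\<xi>. a \<xi> = \<mu>}"
  unfolding alg_mult_def gen_eigenspace_fourier_mult[OF assms]
  using dim_functions_supported_on[OF assms(2)] by simp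

lemma finite_level_set_abs_summable:
  fixes a :: "int^'n \<Rightarrow> complex"
  assumes a: "(\<lambda>\<xi>. norm (a \<xi>)) summable_on UNIV" and "\<mu> \<noteq> 0"
  shows "finite {\<xi>. a \<xi> = \<mu>}"
proof (rule ccontr)
  assume "infinite {\<xi>. a \<xi> = \<mu>}"
  define S where "S = (\<Sum>\<^sub>\<infinity>\<xi>. norm (a \<xi>))"
  obtain n :: nat where n: "S / norm \<mu> < real n" using reals_Archimedean2 by blast
  obtain G where G: "finite G" "card G = n" "G \<subseteq> {\<xi>. a \<xi> = \<mu>}"
    using infinite_arbitrarily_large[OF \<open>infinite _\<close>] by blast
  have "real n * norm \<mu> = (\<Sum>\<xi>\<in>G. norm \<mu>)" using G(2) by simp
  also have "\<dots> = (\<Sum>\<xi>\<in>G. norm (a \<xi>))" using G(3) by (intro sum.cong) auto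
  also have "\<dots> \<le> S" unfolding S_def by (rule finite_sum_le_infsum[OF a G(1)]) auto
  finally show False using n \<open>\<mu> \<noteq> 0\<close> by (simp add: field_simps)
qed

lemma nonzero_eigenvalues_fourier_mult:
  fixes a :: "int^'n \<Rightarrow> complex"
  assumes "0 < p"
  shows "besov_eigenvalues w p 2 (fourier_mult a) - {0} = range a - {0}"
proof safe
  fix \<mu> assume "\<mu> \<in> besov_eigenvalues w p 2 (fourier_mult a)" "\<mu> \<noteq> 0"
  then obtain c where c: "c \<noteq> 0" "fourier_mult a c = (\<lambda>\<xi>. \<mu> * c \<xi>)"
    unfolding besov_eigenvalues_def by blast
  obtain \<xi> where "c \<xi> \<noteq> 0" using c(1) by (auto simp: fun_eq_iff)
  moreover have "a \<xi> * c \<xi> = \<mu> * c \<xi>" using fun_cong[OF c(2), of \<xi>] by (simp add: fourier_mult_def)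
  ultimately show "\<mu> \<in> range a" by (metis mult_cancel_right rangeI)
next
  fix \<xi>
  have "delta \<xi> \<noteq> 0" "fourier_mult a (delta \<xi>) = (\<lambda>\<eta>. a \<xi> * delta \<xi> \<eta>)"
    by (auto simp: delta_def fourier_mult_def fun_eq_iff)
  with delta_in_besov_space[OF assms]
  show "a \<xi> \<in> besov_eigenvalues w p 2 (fourier_mult a)" unfolding besov_eigenvalues_def by blast
qed

lemma has_sum_group_by_value:
  fixes a :: "'a \<Rightarrow> 'b::banach"
  assumes a: "a summable_on UNIV"
  shows "((\<lambda>\<mu>. \<Sum>\<^sub>\<infinity>\<xi>\<in>{\<xi>. a \<xi> = \<mu>}. a \<xi>) has_sum (\<Sum>\<^sub>\<infinity>\<xi>. a \<xi>)) (range a - {0})"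
proof -
  define Z where "Z = {\<xi>. a \<xi> \<noteq> 0}"
  have Sigma: "(\<lambda>\<xi>. (a \<xi>, \<xi>)) ` Z = Sigma (range a - {0}) (\<lambda>\<mu>. {\<xi>. a \<xi> = \<mu>})"
    by (auto simp: Z_def image_iff)
  have inj: "inj_on (\<lambda>\<xi>. (a \<xi>, \<xi>)) Z" by (auto simp: inj_on_def)
  have "a summable_on Z" using summable_on_subset_banach[OF a] by blast
  then have S: "(\<lambda>(\<mu>, \<xi>). a \<xi>) summable_on Sigma (range a - {0}) (\<lambda>\<mu>. {\<xi>. a \<xi> = \<mu>})"
    unfolding Sigma[symmetric] summable_on_reindex[OF inj] by (simp add: o_def)
  have "(\<Sum>\<^sub>\<infinity>\<mu>\<in>range a - {0}. \<Sum>\<^sub>\<infinity>\<xi>\<in>{\<xi>. a \<xi> = \<mu>}. a \<xi>)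
          = (\<Sum>\<^sub>\<infinity>(\<mu>, \<xi>)\<in>Sigma (range a - {0}) (\<lambda>\<mu>. {\<xi>. a \<xi> = \<mu>}). a \<xi>)"
    by (rule infsum_Sigma'_banach[OF S])
  also have "\<dots> = (\<Sum>\<^sub>\<infinity>\<xi>\<in>Z. a \<xi>)"
    unfolding Sigma[symmetric] infsum_reindex[OF inj] by (simp add: o_def)
  also have "\<dots> = (\<Sum>\<^sub>\<infinity>\<xi>. a \<xi>)" by (rule infsum_cong_neutral) (auto simp: Z_def)
  finally show ?thesis using has_sum_infsum[OF summable_on_Sigma_banach[OF S]] by simp
qed

text \<open>Each nonzero value \<open>\<mu>\<close> of \<open>a\<close> is taken on a finite set of frequencies,
  whose size is the multiplicity of \<open>\<mu>\<close>.\<close>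

lemma has_sum_eigenvalues_fourier_mult:
  fixes a :: "int^'n \<Rightarrow> complex"
  assumes p: "0 < p" and a: "(\<lambda>\<xi>. norm (a \<xi>)) summable_on UNIV"
  shows "((\<lambda>\<mu>. \<mu> * of_nat (alg_mult w p 2 (fourier_mult a) \<mu>)) has_sum (\<Sum>\<^sub>\<infinity>\<xi>. a \<xi>))
           (besov_eigenvalues w p 2 (fourier_mult a) - {0})"
proof -
  have fibre_sum: "(\<Sum>\<^sub>\<infinity>\<xi>\<in>{\<xi>. a \<xi> = \<mu>}. a \<xi>) = \<mu> * of_nat (alg_mult w p 2 (fourier_mult a) \<mu>)"
    if "\<mu> \<in> range a - {0}" for \<mu>
  proof -
    have fin: "finite {\<xi>. a \<xi> = \<mu>}" using finite_level_set_abs_summable[OF a] that by blast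
    then have "(\<Sum>\<^sub>\<infinity>\<xi>\<in>{\<xi>. a \<xi> = \<mu>}. a \<xi>) = (\<Sum>\<xi>\<in>{\<xi>. a \<xi> = \<mu>}. \<mu>)" by simp
    also have "\<dots> = \<mu> * of_nat (card {\<xi>. a \<xi> = \<mu>})" by (simp add: mult.commute)
    finally show ?thesis using alg_mult_fourier_mult[OF p fin] by simp
  qed
  have "a summable_on UNIV" using a summable_on_iff_abs_summable_on_complex by blast
  from has_sum_group_by_value[OF this] show ?thesis
    unfolding nonzero_eigenvalues_fourier_mult[OF p]
    by (rule has_sum_cong[THEN iffD1, rotated]) (simp add: fibre_sum)
qed

theorem theorem5p3:
  fixes a :: "int^'n \<Rightarrow> complex" and p1 \<alpha> m C :: real
  assumes "1 < p1" and "p1 < 2"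
    and "\<alpha> = 1 / p1 - 1 / 2"
    and "\<forall>\<xi>. norm (a \<xi>) \<le> C * jbracket \<xi> powr m"
    and "m < - real CARD('n) - \<alpha> * real CARD('n)"
  shows "\<forall>w::real.
    nuclear_on w p1 2 (fourier_mult a) \<and>
    a summable_on UNIV \<and>
    (\<forall>l y. nuclear_rep w p1 2 (fourier_mult a) l y \<longrightarrow>
        nuclear_trace_of l y = (\<Sum>\<^sub>\<infinity>\<xi>. a \<xi>)) \<and>
    (\<lambda>\<mu>. \<mu> * of_nat (alg_mult w p1 2 (fourier_mult a) \<mu>))
        summable_on (besov_eigenvalues w p1 2 (fourier_mult a) - {0}) \<and>
    (\<Sum>\<^sub>\<infinity>\<mu>\<in>besov_eigenvalues w p1 2 (fourier_mult a) - {0}.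
        \<mu> * of_nat (alg_mult w p1 2 (fourier_mult a) \<mu>)) = (\<Sum>\<^sub>\<infinity>\<xi>. a \<xi>)"
proof (rule allI, intro conjI)
  fix w :: real
  have p: "1 < p1" and p0: "0 < p1" using assms(1) by simp_all
  \<comment> \<open>\<open>p1 < 2\<close> and the value of \<open>\<alpha>\<close> only serve to give \<open>m < -n\<close>.\<close>
  have "1/2 \<le> 1/p1" using assms(1,2) by (simp add: field_simps)
  then have "0 \<le> \<alpha>" using assms(3) by simp
  then have "m < - real CARD('n)" using assms(5) by (smt (verit) mult_nonneg_nonneg of_nat_0_le_iff)
  then have abs_a: "(\<lambda>\<xi>. norm (a \<xi>)) summable_on UNIV" by (rule abs_summable_symbol[OF assms(4)])
  then show a: "a summable_on UNIV" using summable_on_iff_abs_summable_on_complex by blast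
  show "nuclear_on w p1 2 (fourier_mult a)"
    unfolding nuclear_on_def using nuclear_rep_fourier_mult[OF p abs_a] by blast
  have diag: "fourier_mult a (delta \<xi>) \<xi> = a \<xi>" for \<xi> by (simp add: fourier_mult_def delta_def)
  show "\<forall>l y. nuclear_rep w p1 2 (fourier_mult a) l y \<longrightarrow> nuclear_trace_of l y = (\<Sum>\<^sub>\<infinity>\<xi>. a \<xi>)"
    using nuclear_trace_eq_infsum_diagonal[OF p, of w "fourier_mult a"] a by (simp add: diag)
  from has_sum_eigenvalues_fourier_mult[OF p0 abs_a, of w]
  show "(\<lambda>\<mu>. \<mu> * of_nat (alg_mult w p1 2 (fourier_mult a) \<mu>))
          summable_on (besov_eigenvalues w p1 2 (fourier_mult a) - {0})"
    and "(\<Sum>\<^sub>\<infinity>\<mu>\<in>besov_eigenvalues w p1 2 (fourier_mult a) - {0}.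
          \<mu> * of_nat (alg_mult w p1 2 (fourier_mult a) \<mu>)) = (\<Sum>\<^sub>\<infinity>\<xi>. a \<xi>)"
    by (auto simp: has_sum_iff)
qed

end
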